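(* Let $(\mathfrak g,[\cdot,\cdot],J,\omega_0)$ be a hermitian Lie algebra with Chern-Ricci operator $P_0$, and let $\mu(t)$ be the bracket flow solution starting at $[\cdot,\cdot]$, defined on the maximal interval $(T_-,T_+)$. For a choice of sign $\pm$, suppose $T_\pm=\pm\infty$ and $\mu(t)\to\lambda$ as $t\to\pm\infty$. Then the hermitian Lie algebra $(\mathfrak g,\lambda,J,\omega_0)$ is Chern-Ricci flat, i.e. its Chern-Ricci operator $P_\lambda$ vanishes.
   Context: A hermitian Lie algebra $(\mathfrak g,\mu,J,\omega)$: a real Lie bracket $\mu$ on the vector space $\mathfrak g$, $J$ with $J^2=-I$ integrable ($\mu(JX,JY)=\mu(X,Y)+J\mu(JX,Y)+J\mu(X,JY)$), and a nondegenerate 2-form $\omega$ with $\omega(J\cdot,J\cdot)=\omega$ and $g=\omega(\cdot,J\cdot)$ positive definite. Chern-Ricci form: $p(X,Y)=-\tfrac12\operatorname{tr}(J\,\mathrm{ad}_{\mu}{\mu(X,Y)})+\tfrac12\operatorname{tr}(\mathrm{ad}_\mu{J\mu(X,Y)})$; Chern-Ricci operator $P_\mu$ defined by $p=\omega(P_\mu\cdot,\cdot)$. With $J,\omega_0$ fixed, the bracket flow is the ODE $\frac{d}{dt}\mu=\delta_\mu(P_\mu)$, $\mu(0)=[\cdot,\cdot]$, where $P_\mu$ is the Chern-Ricci operator of $(\mathfrak g,\mu,J,\omega_0)$ and $\delta_\mu(A)=\mu(A\cdot,\cdot)+\mu(\cdot,A\cdot)-A\mu(\cdot,\cdot)$.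 Its solution is $\mu(t)=h(t)\cdot[\cdot,\cdot]$ with $h(t)=(I-2tP_0)^{1/2}$, where $h\cdot\mu=h\mu(h^{-1}\cdot,h^{-1}\cdot)$; it is defined on $(T_-,T_+)$, where $T_+=\infty$ if $P_0\le0$ and $T_+=1/(2p_+)$ otherwise ($p_+$ the maximal positive eigenvalue of $P_0$), and $T_-=-\infty$ if $P_0\ge0$ and $T_-=1/(2p_-)$ otherwise ($p_-$ the minimal negative eigenvalue of $P_0$). Statements with $\pm$ are two separate statements, one for each sign. *)

theory Defs
  imports "HOL-Analysis.Analysis"
begin

text \<open>The Lie algebra g is modelled as real^'n ('n a finite index type), a bracket as a
  function mu :: real^'n => real^'n => real^'n, J as a function real^'n => real^'n and
  omega as a function real^'n => real^'n => real.\<close>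

type_synonym 'n brkt = "real^'n \<Rightarrow> real^'n \<Rightarrow> real^'n"

definition lie_bracket :: "'n::finite brkt \<Rightarrow> bool" where
  "lie_bracket mu \<longleftrightarrow> bilinear mu \<and> (\<forall>X Y. mu X Y = - mu Y X) \<and>
     (\<forall>X Y Z. mu X (mu Y Z) + mu Y (mu Z X) + mu Z (mu X Y) = 0)"

definition hermitian_lie_algebra ::
  "'n::finite brkt \<Rightarrow> (real^'n \<Rightarrow> real^'n) \<Rightarrow> (real^'n \<Rightarrow> real^'n \<Rightarrow> real) \<Rightarrow> bool" where
  "hermitian_lie_algebra mu J om \<longleftrightarrow>
     lie_bracket mu \<and> linear J \<and> (\<forall>X. J (J X) = - X) \<and>
     (\<forall>X Y. mu (J X) (J Y) = mu X Y + J (mu (J X) Y) + J (mu X (J Y))) \<and>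
     bilinear om \<and> (\<forall>X Y. om X Y = - om Y X) \<and>
     (\<forall>X. (\<forall>Y. om X Y = 0) \<longrightarrow> X = 0) \<and>
     (\<forall>X Y. om (J X) (J Y) = om X Y) \<and>
     (\<forall>X. X \<noteq> 0 \<longrightarrow> om X (J X) > 0)"

definition ad :: "'n::finite brkt \<Rightarrow> real^'n \<Rightarrow> real^'n^'n" where
  "ad mu Z = matrix (\<lambda>X. mu Z X)"

definition chern_ricci_form ::
  "'n::finite brkt \<Rightarrow> (real^'n \<Rightarrow> real^'n) \<Rightarrow> real^'n \<Rightarrow> real^'n \<Rightarrow> real" where
  "chern_ricci_form mu J X Y =
     - (1/2) * trace (matrix J ** ad mu (mu X Y)) + (1/2) * trace (ad mu (J (mu X Y)))"

definition chern_ricci_op ::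
  "'n::finite brkt \<Rightarrow> (real^'n \<Rightarrow> real^'n) \<Rightarrow> (real^'n \<Rightarrow> real^'n \<Rightarrow> real) \<Rightarrow> real^'n \<Rightarrow> real^'n" where
  "chern_ricci_op mu J om X = (THE Z. \<forall>Y. om Z Y = chern_ricci_form mu J X Y)"

definition delta :: "'n::finite brkt \<Rightarrow> (real^'n \<Rightarrow> real^'n) \<Rightarrow> 'n brkt" where
  "delta mu A X Y = mu (A X) Y + mu X (A Y) - A (mu X Y)"

end

theory Submission
  imports Defs
begin

text \<open>Along the bracket flow the asymmetry, the Jacobiator and the Nijenhuis tensor of \<open>\<mu>(t)\<close>
  satisfy linear ODEs with continuous coefficients and vanish at \<open>t = 0\<close>, hence vanish for all \<open>t\<close>:
  every \<open>\<mu>(t)\<close>, and therefore the limit \<open>\<lambda>\<close>, is a hermitian Lie bracket. As \<open>\<mu>(t)\<close> converges, its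
  velocity \<open>\<delta>\<^sub>\<mu>(P\<^sub>\<mu>)\<close> can only converge to \<open>0\<close>, so \<open>P\<^sub>\<lambda>\<close> is a derivation of \<open>\<lambda>\<close>. Finally, a
  Chern-Ricci operator that is a derivation vanishes; integrability enters there, making it commute with \<open>J\<close>.\<close>

section \<open>Traces and duals on \<open>real^'n\<close>\<close>

definition map_trace :: "(real^'n::finite \<Rightarrow> real^'n) \<Rightarrow> real" where
  "map_trace f = (\<Sum>i\<in>UNIV. f (axis i 1) $ i)"

lemma axis_expansion: "(x::real^'n::finite) = (\<Sum>i\<in>UNIV. x$i *\<^sub>R axis i 1)"
  using basis_expansion[of x] by (simp add: scalar_mult_eq_scaleR)

lemma linear_axis_expansion:
  assumes "linear f"
  shows "f X = (\<Sum>i\<in>UNIV. X$i *\<^sub>R f (axis i 1))"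
  by (subst axis_expansion) (simp add: linear_sum[OF assms] linear_scale[OF assms])

lemma bilinear_axis_expansion:
  assumes "bilinear f"
  shows "f X Y = (\<Sum>i\<in>UNIV. \<Sum>j\<in>UNIV. (X$i * Y$j) *\<^sub>R f (axis i 1) (axis j 1))"
proof -
  have "f X Y = f (\<Sum>i\<in>UNIV. X$i *\<^sub>R axis i 1) (\<Sum>j\<in>UNIV. Y$j *\<^sub>R axis j 1)"
    by (metis axis_expansion)
  also have "\<dots> = (\<Sum>i\<in>UNIV. \<Sum>j\<in>UNIV. (X$i * Y$j) *\<^sub>R f (axis i 1) (axis j 1))"
    by (simp add: bilinear_sum[OF assms] sum.cartesian_product bilinear_lmul[OF assms]
        bilinear_rmul[OF assms] mult.commute)
  finally show ?thesis .
qed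

lemma bilinear_linear_left: "bilinear mu \<Longrightarrow> linear (\<lambda>x. mu x y)"
  by (simp add: bilinear_def)

lemma bilinear_linear_right: "bilinear mu \<Longrightarrow> linear (mu x)"
  by (simp add: bilinear_def)

lemma map_trace_eq_trace_matrix: "map_trace f = trace (matrix f)"
  by (simp add: map_trace_def trace_def matrix_def)

lemma trace_ad: "trace (ad mu Z) = map_trace (mu Z)"
  by (simp add: ad_def map_trace_eq_trace_matrix)

lemma trace_matrix_mult_ad:
  assumes "linear J"
  shows "trace (matrix J ** ad mu Z) = map_trace (\<lambda>x. J (mu Z x))"
proof -
  have "(matrix J ** ad mu Z) $ i $ i = J (mu Z (axis i 1)) $ i" for i
    using linear_axis_expansion[OF assms, of "mu Z (axis i 1)"]
    by (simp add: matrix_matrix_mult_def ad_def matrix_def mult.commute)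
  then show ?thesis by (simp add: trace_def map_trace_def)
qed

lemma map_trace_comp_commute:
  assumes "linear f" "linear g"
  shows "map_trace (\<lambda>x. f (g x)) = map_trace (\<lambda>x. g (f x))"
  using matrix_compose[OF assms(2,1)] matrix_compose[OF assms] trace_mul_sym[of "matrix f" "matrix g"]
  by (simp add: map_trace_eq_trace_matrix o_def)

lemma map_trace_add: "map_trace (\<lambda>x. f x + g x) = map_trace f + map_trace g"
  by (simp add: map_trace_def sum.distrib)

lemma map_trace_diff: "map_trace (\<lambda>x. f x - g x) = map_trace f - map_trace g"
  by (simp add: map_trace_def sum_subtractf)

lemma map_trace_scale: "map_trace (\<lambda>x. c *\<^sub>R f x) = c * map_trace f"
  by (simp add: map_trace_def sum_distrib_left)

lemma map_trace_neg: "map_trace (\<lambda>x. - f x) = - map_trace f"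
  by (simp add: map_trace_def sum_negf)

definition ricci_functional :: "'n::finite brkt \<Rightarrow> (real^'n \<Rightarrow> real^'n) \<Rightarrow> real^'n \<Rightarrow> real" where
  "ricci_functional mu J Z = -(1/2) * map_trace (\<lambda>x. J (mu Z x)) + (1/2) * map_trace (mu (J Z))"

lemma chern_ricci_form_eq:
  "linear J \<Longrightarrow> chern_ricci_form mu J X Y = ricci_functional mu J (mu X Y)"
  by (simp add: chern_ricci_form_def ricci_functional_def trace_matrix_mult_ad trace_ad)

lemma linear_ricci_functional:
  assumes mu: "bilinear mu" and J: "linear J"
  shows "linear (ricci_functional mu J)"
proof -
  have "mu (a + b) = (\<lambda>x. mu a x + mu b x)" "mu (c *\<^sub>R a) = (\<lambda>x. c *\<^sub>R mu a x)" for a b c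
    by (simp_all add: fun_eq_iff bilinear_ladd[OF mu] bilinear_lmul[OF mu])
  then show ?thesis
    by (intro linearI) (simp_all add: ricci_functional_def linear_add[OF J] linear_scale[OF J]
        map_trace_add map_trace_scale algebra_simps)
qed

definition nondegenerate :: "(real^'n::finite \<Rightarrow> real^'n \<Rightarrow> real) \<Rightarrow> bool" where
  "nondegenerate om \<longleftrightarrow> bilinear om \<and> (\<forall>X. (\<forall>Y. om X Y = 0) \<longrightarrow> X = 0)"

lemma nondegenerate_bilinear: "nondegenerate om \<Longrightarrow> bilinear om"
  by (simp add: nondegenerate_def)

lemma nondegenerate_eq_0: "nondegenerate om \<Longrightarrow> (\<And>Y. om X Y = 0) \<Longrightarrow> X = 0"
  by (simp add: nondegenerate_def)

lemma nondegenerate_dual_basis_exists: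
  fixes om :: "real^'n::finite \<Rightarrow> real^'n \<Rightarrow> real"
  assumes "nondegenerate om"
  shows "\<exists>w. \<forall>Y. om w Y = Y $ j"
proof -
  have om: "bilinear om" by (rule nondegenerate_bilinear[OF assms])
  define F where "F Z = (\<chi> k. om Z (axis k 1))" for Z :: "real^'n"
  have lF: "linear F"
    by (rule linearI) (simp_all add: F_def vec_eq_iff bilinear_ladd[OF om] bilinear_lmul[OF om])
  have "inj F"
  proof (rule linear_injective_0[OF lF, THEN iffD2], intro allI impI)
    fix Z assume "F Z = 0"
    then have "om Z Y = 0" for Y
      by (subst linear_axis_expansion[OF bilinear_linear_right[OF om]]) (simp add: F_def vec_eq_iff)
    then show "Z = 0" by (rule nondegenerate_eq_0[OF assms])
  qed
  then obtain w where w: "F w = axis j 1"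
    by (metis linear_inj_imp_surj[OF lF] surjD)
  then have w_axis: "om w (axis k 1) = (if k = j then 1 else 0)" for k
    by (simp add: F_def vec_eq_iff axis_def)
  have "om w Y = Y $ j" for Y
    by (subst linear_axis_expansion[OF bilinear_linear_right[OF om]])
      (simp add: w_axis if_distrib cong: if_cong)
  then show ?thesis by blast
qed

definition dual_basis :: "(real^'n::finite \<Rightarrow> real^'n \<Rightarrow> real) \<Rightarrow> 'n \<Rightarrow> real^'n" where
  "dual_basis om j = (SOME w. \<forall>Y. om w Y = Y $ j)"

definition dual_vector :: "(real^'n::finite \<Rightarrow> real^'n \<Rightarrow> real) \<Rightarrow> (real^'n \<Rightarrow> real) \<Rightarrow> real^'n" where
  "dual_vector om f = (\<Sum>j\<in>UNIV. f (axis j 1) *\<^sub>R dual_basis om j)"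

lemma dual_basis: "nondegenerate om \<Longrightarrow> om (dual_basis om j) Y = Y $ j"
  unfolding dual_basis_def using someI_ex[OF nondegenerate_dual_basis_exists] by blast

lemma dual_vector:
  assumes "nondegenerate om" "linear f"
  shows "om (dual_vector om f) Y = f Y"
proof -
  have l: "linear (\<lambda>X. om X Y)"
    by (rule bilinear_linear_left[OF nondegenerate_bilinear[OF assms(1)]])
  have "om (dual_vector om f) Y = (\<Sum>j\<in>UNIV. f (axis j 1) * Y $ j)"
    by (simp add: dual_vector_def linear_sum[OF l] linear_scale[OF l] dual_basis[OF assms(1)])
  also have "\<dots> = f Y"
    by (simp add: linear_axis_expansion[OF assms(2), of Y] mult.commute)
  finally show ?thesis .
qed

lemma dual_vector_unique:
  assumes "nondegenerate om" "linear f" "\<forall>Y. om Z Y = f Y"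
  shows "Z = dual_vector om f"
proof -
  have "om (Z - dual_vector om f) Y = 0" for Y
    using assms dual_vector[OF assms(1,2)] by (simp add: bilinear_lsub[OF nondegenerate_bilinear[OF assms(1)]])
  then show ?thesis
    using nondegenerate_eq_0[OF assms(1)] by force
qed

lemma linear_dual_vector_arg:
  assumes "\<And>Y. linear (\<lambda>X. f X Y)"
  shows "linear (\<lambda>X. dual_vector om (f X))"
  unfolding dual_vector_def
  by (rule linearI) (simp_all add: linear_add[OF assms] linear_scale[OF assms] scaleR_add_left
      sum.distrib scaleR_sum_right)

lemma dual_vector_add: "dual_vector om (\<lambda>Y. f Y + g Y) = dual_vector om f + dual_vector om g"
  by (simp add: dual_vector_def scaleR_add_left sum.distrib)

lemma dual_vector_scale: "dual_vector om (\<lambda>Y. c * f Y) = c *\<^sub>R dual_vector om f"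
  by (simp add: dual_vector_def scaleR_sum_right)

lemma bilinear_delta:
  assumes mu: "bilinear mu" and A: "linear A"
  shows "bilinear (delta mu A)"
  unfolding bilinear_def delta_def
  by (intro allI conjI linearI) (simp_all add: bilinear_ladd[OF mu] bilinear_radd[OF mu]
      bilinear_lmul[OF mu] bilinear_rmul[OF mu] linear_add[OF A] linear_scale[OF A] algebra_simps)

lemma delta_add:
  "linear A \<Longrightarrow> delta (\<lambda>X Y. m1 X Y + m2 X Y) A = (\<lambda>X Y. delta m1 A X Y + delta m2 A X Y)"
  by (simp add: fun_eq_iff delta_def linear_add algebra_simps)

lemma delta_scale:
  "linear A \<Longrightarrow> delta (\<lambda>X Y. c *\<^sub>R m X Y) A = (\<lambda>X Y. c *\<^sub>R delta m A X Y)"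
  by (simp add: fun_eq_iff delta_def linear_scale algebra_simps)

section \<open>The Chern-Ricci operator\<close>

text \<open>Unlike the definition by \<open>THE\<close>, this formula shows that \<open>P\<close> depends continuously on the bracket.\<close>

lemma chern_ricci_op_eq_dual_vector:
  assumes "nondegenerate om" "bilinear mu" "linear J"
  shows "chern_ricci_op mu J om X = dual_vector om (\<lambda>Y. ricci_functional mu J (mu X Y))"
proof -
  have l: "linear (\<lambda>Y. ricci_functional mu J (mu X Y))"
    using linear_compose[OF bilinear_linear_right[OF assms(2)] linear_ricci_functional[OF assms(2,3)]]
    by (simp add: o_def)
  show ?thesis
    unfolding chern_ricci_op_def chern_ricci_form_eq[OF assms(3)]
    by (rule the_equality) (use dual_vector[OF assms(1) l] dual_vector_unique[OF assms(1) l] in auto)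
qed

lemma chern_ricci_op_pairing:
  assumes "nondegenerate om" "bilinear mu" "linear J"
  shows "om (chern_ricci_op mu J om X) Y = ricci_functional mu J (mu X Y)"
  using linear_compose[OF bilinear_linear_right[OF assms(2)] linear_ricci_functional[OF assms(2,3)]]
  by (simp add: chern_ricci_op_eq_dual_vector[OF assms] dual_vector[OF assms(1)] o_def)

lemma linear_chern_ricci_op:
  assumes "nondegenerate om" "bilinear mu" "linear J"
  shows "linear (chern_ricci_op mu J om)"
  using linear_dual_vector_arg[OF linear_compose[OF bilinear_linear_left[OF assms(2)]
        linear_ricci_functional[OF assms(2,3)], unfolded o_def]]
  by (simp add: chern_ricci_op_eq_dual_vector[OF assms, abs_def])

lemma bilinear_limit:
  fixes mu :: "'a \<Rightarrow> 'n::finite brkt"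
  assumes F: "F \<noteq> bot" and ev: "eventually (\<lambda>t. bilinear (mu t)) F"
    and conv: "\<And>X Y. ((\<lambda>t. mu t X Y) \<longlongrightarrow> lam X Y) F"
  shows "bilinear lam"
proof -
  have lim: "lam' = lam X Y" if "((\<lambda>t. mu t X Y) \<longlongrightarrow> lam') F" for X Y lam'
    using tendsto_unique[OF F that conv] .
  have "((\<lambda>t. mu t (a + b) y) \<longlongrightarrow> lam a y + lam b y) F"
    "((\<lambda>t. mu t (c *\<^sub>R a) y) \<longlongrightarrow> c *\<^sub>R lam a y) F"
    "((\<lambda>t. mu t y (a + b)) \<longlongrightarrow> lam y a + lam y b) F"
    "((\<lambda>t. mu t y (c *\<^sub>R a)) \<longlongrightarrow> c *\<^sub>R lam y a) F" for a b c y
    by (intro Lim_transform_eventually[OF tendsto_add[OF conv conv]]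
        Lim_transform_eventually[OF tendsto_scaleR[OF tendsto_const conv]];
        use ev in \<open>auto elim!: eventually_mono simp: bilinear_ladd bilinear_lmul bilinear_radd bilinear_rmul\<close>)+
  then show ?thesis
    unfolding bilinear_def by (intro allI conjI linearI) (metis lim)+
qed

lemma tendsto_bracket:
  fixes mu :: "'a \<Rightarrow> 'n::finite brkt"
  assumes ev: "eventually (\<lambda>t. bilinear (mu t)) F"
    and conv: "\<And>X Y. ((\<lambda>t. mu t X Y) \<longlongrightarrow> lam X Y) F" and lam: "bilinear lam"
    and a: "(a \<longlongrightarrow> a0) F" and b: "(b \<longlongrightarrow> b0) F"
  shows "((\<lambda>t. mu t (a t) (b t)) \<longlongrightarrow> lam a0 b0) F"
proof -
  have "((\<lambda>t. \<Sum>i\<in>UNIV. \<Sum>j\<in>UNIV. (a t $ i * b t $ j) *\<^sub>R mu t (axis i 1) (axis j 1))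
        \<longlongrightarrow> (\<Sum>i\<in>UNIV. \<Sum>j\<in>UNIV. (a0 $ i * b0 $ j) *\<^sub>R lam (axis i 1) (axis j 1))) F"
    by (intro tendsto_intros a b conv)
  then show ?thesis
    unfolding bilinear_axis_expansion[OF lam, of a0 b0, symmetric]
    by (rule Lim_transform_eventually)
      (use ev in \<open>auto elim!: eventually_mono intro: bilinear_axis_expansion[symmetric]\<close>)
qed

lemma tendsto_bilinear:
  "bilinear (f :: 'n::finite brkt) \<Longrightarrow> (a \<longlongrightarrow> a0) F \<Longrightarrow> (b \<longlongrightarrow> b0) F \<Longrightarrow>
    ((\<lambda>s. f (a s) (b s)) \<longlongrightarrow> f a0 b0) F"
  by (rule tendsto_bracket[where mu="\<lambda>_. f"]) auto

lemma tendsto_linear: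
  fixes J :: "real^'n::finite \<Rightarrow> real^'n"
  assumes "linear J" "(a \<longlongrightarrow> a0) F"
  shows "((\<lambda>t. J (a t)) \<longlongrightarrow> J a0) F"
  using linear_conv_bounded_linear[THEN iffD1, OF assms(1)] assms(2)
  by (rule bounded_linear.tendsto)

lemma tendsto_map_trace:
  fixes f :: "'a \<Rightarrow> real^'n::finite \<Rightarrow> real^'n"
  assumes "\<And>x. ((\<lambda>t. f t x) \<longlongrightarrow> f0 x) F"
  shows "((\<lambda>t. map_trace (f t)) \<longlongrightarrow> map_trace f0) F"
  unfolding map_trace_def by (intro tendsto_intros assms)

lemma tendsto_dual_vector:
  assumes "\<And>Y. ((\<lambda>t. f t Y) \<longlongrightarrow> f0 Y) F"
  shows "((\<lambda>t. dual_vector om (f t)) \<longlongrightarrow> dual_vector om f0) F"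
  unfolding dual_vector_def by (intro tendsto_intros assms)

lemma tendsto_chern_ricci_op:
  fixes mu :: "'a \<Rightarrow> 'n::finite brkt"
  assumes ev: "eventually (\<lambda>t. bilinear (mu t)) F"
    and conv: "\<And>X Y. ((\<lambda>t. mu t X Y) \<longlongrightarrow> lam X Y) F" and lam: "bilinear lam"
    and J: "linear J" and om: "nondegenerate om" and z: "(z \<longlongrightarrow> z0) F"
  shows "((\<lambda>t. chern_ricci_op (mu t) J om (z t)) \<longlongrightarrow> chern_ricci_op lam J om z0) F"
proof -
  note tendsto_mu = tendsto_bracket[OF ev conv lam]
  have "((\<lambda>t. dual_vector om (\<lambda>Y. ricci_functional (mu t) J (mu t (z t) Y))) \<longlongrightarrow>
      dual_vector om (\<lambda>Y. ricci_functional lam J (lam z0 Y))) F"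
    unfolding ricci_functional_def
    by (intro tendsto_dual_vector tendsto_intros tendsto_map_trace tendsto_linear[OF J]
        tendsto_mu z tendsto_const)
  then show ?thesis
    unfolding chern_ricci_op_eq_dual_vector[OF om lam J]
    by (rule Lim_transform_eventually)
      (use ev in \<open>auto elim!: eventually_mono simp: chern_ricci_op_eq_dual_vector[OF om _ J]\<close>)
qed

lemma tendsto_delta_chern_ricci_op:
  fixes mu :: "'a \<Rightarrow> 'n::finite brkt"
  assumes ev: "eventually (\<lambda>t. bilinear (mu t)) F"
    and conv: "\<And>X Y. ((\<lambda>t. mu t X Y) \<longlongrightarrow> lam X Y) F" and lam: "bilinear lam"
    and J: "linear J" and om: "nondegenerate om"
  shows "((\<lambda>t. delta (mu t) (chern_ricci_op (mu t) J om) X Y) \<longlongrightarrow> delta lam (chern_ricci_op lam J om) X Y) F"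
  unfolding delta_def
  by (intro tendsto_intros tendsto_bracket[OF ev conv lam] tendsto_chern_ricci_op[OF ev conv lam J om]
      conv tendsto_const)

section \<open>Complex structures\<close>

locale complex_structure =
  fixes J :: "real^'n::finite \<Rightarrow> real^'n"
  assumes linear_J: "linear J" and J_J: "\<And>x. J (J x) = - x"
begin

lemma J_simps:
  "J (a + b) = J a + J b" "J (a - b) = J a - J b" "J (c *\<^sub>R a) = c *\<^sub>R J a" "J (- a) = - J a"
  "J 0 = 0" "J (J x) = - x"
  using linear_J by (simp_all add: linear_add linear_diff linear_scale linear_neg linear_0 J_J)

lemma map_trace_J_antilinear:
  assumes h: "linear h" and anti: "\<And>v. h (J v) = - J (h v)"
  shows "map_trace h = 0"
proof -
  have "map_trace (\<lambda>x. J (h (J x))) = map_trace (\<lambda>x. h (J (J x)))"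
    using map_trace_comp_commute[OF linear_J, of "\<lambda>x. h (J x)"] linear_compose[OF linear_J h]
    by (simp add: o_def)
  also have "\<dots> = - map_trace h" by (simp add: J_J linear_neg[OF h] map_trace_neg)
  finally show ?thesis by (simp add: anti J_simps)
qed

end

definition antilinear_part :: "(real^'n::finite \<Rightarrow> real^'n) \<Rightarrow> (real^'n \<Rightarrow> real^'n) \<Rightarrow> real^'n \<Rightarrow> real^'n" where
  "antilinear_part J f v = (1/2) *\<^sub>R (f v + J (f (J v)))"

definition complex_linear_part :: "(real^'n::finite \<Rightarrow> real^'n) \<Rightarrow> (real^'n \<Rightarrow> real^'n) \<Rightarrow> real^'n \<Rightarrow> real^'n" where
  "complex_linear_part J f v = (1/2) *\<^sub>R (f v - J (f (J v)))"

definition trace_J_bracket :: "(real^'n::finite \<Rightarrow> real^'n) \<Rightarrow> (real^'n \<Rightarrow> real^'n) \<Rightarrow> (real^'n \<Rightarrow> real^'n) \<Rightarrow> real" where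
  "trace_J_bracket J f g = map_trace (\<lambda>x. J (f (g x) - g (f x)))"

context complex_structure
begin

lemma linear_antilinear_part: "linear f \<Longrightarrow> linear (antilinear_part J f)"
  unfolding antilinear_part_def
  by (rule linearI) (simp_all add: linear_add linear_scale J_simps algebra_simps)

lemma linear_complex_linear_part: "linear f \<Longrightarrow> linear (complex_linear_part J f)"
  unfolding complex_linear_part_def
  by (rule linearI) (simp_all add: linear_add linear_scale J_simps algebra_simps)

lemma antilinear_part_J: "linear f \<Longrightarrow> antilinear_part J f (J v) = - J (antilinear_part J f v)"
  unfolding antilinear_part_def by (simp add: J_simps linear_neg algebra_simps)

lemma complex_linear_part_J: "linear f \<Longrightarrow> complex_linear_part J f (J v) = J (complex_linear_part J f v)"
  unfolding complex_linear_part_def by (simp add: J_simps linear_neg algebra_simps)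

lemma complex_linear_part_add_antilinear_part:
  "(\<lambda>v. complex_linear_part J f v + antilinear_part J f v) = f"
proof -
  have "(1/2) *\<^sub>R (x - y) + (1/2) *\<^sub>R (x + y) = (x::real^'n)" for x y
    by (simp add: algebra_simps flip: scaleR_add_left)
  then show ?thesis
    by (simp add: fun_eq_iff complex_linear_part_def antilinear_part_def)
qed

lemma trace_J_bracket_add_left:
  "linear g \<Longrightarrow> trace_J_bracket J (\<lambda>x. f1 x + f2 x) g = trace_J_bracket J f1 g + trace_J_bracket J f2 g"
  unfolding trace_J_bracket_def by (simp add: linear_add J_simps map_trace_add[symmetric] algebra_simps)

lemma trace_J_bracket_add_right:
  "linear f \<Longrightarrow> trace_J_bracket J f (\<lambda>x. g1 x + g2 x) = trace_J_bracket J f g1 + trace_J_bracket J f g2"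
  unfolding trace_J_bracket_def by (simp add: linear_add J_simps map_trace_add[symmetric] algebra_simps)

lemma trace_J_bracket_scale_left:
  "linear g \<Longrightarrow> trace_J_bracket J (\<lambda>x. c *\<^sub>R f x) g = c * trace_J_bracket J f g"
  unfolding trace_J_bracket_def by (simp add: linear_scale J_simps map_trace_scale[symmetric] algebra_simps)

lemma trace_J_bracket_scale_right:
  "linear f \<Longrightarrow> trace_J_bracket J f (\<lambda>x. c *\<^sub>R g x) = c * trace_J_bracket J f g"
  unfolding trace_J_bracket_def by (simp add: linear_scale J_simps map_trace_scale[symmetric] algebra_simps)

lemma trace_J_bracket_swap: "trace_J_bracket J f g = - trace_J_bracket J g f"
  unfolding trace_J_bracket_def by (simp add: J_simps map_trace_diff)

lemma trace_J_bracket_complex_linear: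
  assumes "linear f" "linear g" "\<And>v. f (J v) = J (f v)"
  shows "trace_J_bracket J f g = 0"
proof -
  have "map_trace (\<lambda>x. J (g (f x))) = map_trace (\<lambda>x. f (J (g x)))"
    using map_trace_comp_commute[OF linear_compose[OF assms(2) linear_J, unfolded o_def] assms(1)] by simp
  then show ?thesis
    unfolding trace_J_bracket_def by (simp add: J_simps map_trace_diff assms(3))
qed

lemma trace_J_bracket_complex_antilinear:
  assumes f: "linear f" "\<And>v. f (J v) = J (f v)" and g: "linear g" "\<And>v. g (J v) = - J (g v)"
  shows "trace_J_bracket J f g = 0"
proof -
  have "map_trace (\<lambda>x. J (f (g x))) = 0"
    by (rule map_trace_J_antilinear[OF linear_compose[OF linear_compose[OF g(1) f(1)] linear_J,
          unfolded o_def]]) (simp add: f g J_simps linear_neg[OF f(1)])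
  moreover have "map_trace (\<lambda>x. J (g (f x))) = 0"
    by (rule map_trace_J_antilinear[OF linear_compose[OF linear_compose[OF f(1) g(1)] linear_J,
          unfolded o_def]]) (simp add: f g J_simps)
  ultimately show ?thesis
    unfolding trace_J_bracket_def by (simp add: J_simps map_trace_diff)
qed

lemma trace_J_bracket_antilinear_parts:
  assumes f: "linear f" and g: "linear g"
  shows "trace_J_bracket J f g = trace_J_bracket J (antilinear_part J f) (antilinear_part J g)"
proof -
  note lin = linear_antilinear_part[OF f] linear_antilinear_part[OF g]
    linear_complex_linear_part[OF f] linear_complex_linear_part[OF g]
  have "trace_J_bracket J f g = trace_J_bracket J
      (\<lambda>v. complex_linear_part J f v + antilinear_part J f v)
      (\<lambda>v. complex_linear_part J g v + antilinear_part J g v)"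
    by (simp only: complex_linear_part_add_antilinear_part)
  also have "\<dots> =
      trace_J_bracket J (complex_linear_part J f) (complex_linear_part J g)
    + trace_J_bracket J (complex_linear_part J f) (antilinear_part J g)
    + (trace_J_bracket J (antilinear_part J f) (complex_linear_part J g)
    + trace_J_bracket J (antilinear_part J f) (antilinear_part J g))"
    by (simp add: trace_J_bracket_add_left trace_J_bracket_add_right lin linear_compose_add)
  also have "trace_J_bracket J (complex_linear_part J f) (complex_linear_part J g) = 0"
    by (rule trace_J_bracket_complex_linear[OF lin(3,4) complex_linear_part_J[OF f]])
  also have "trace_J_bracket J (complex_linear_part J f) (antilinear_part J g) = 0"
    by (rule trace_J_bracket_complex_antilinear[OF lin(3) complex_linear_part_J[OF f] lin(2)
          antilinear_part_J[OF g]])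
  also have "trace_J_bracket J (antilinear_part J f) (complex_linear_part J g) = 0"
    using trace_J_bracket_complex_antilinear[OF lin(4) complex_linear_part_J[OF g] lin(1)
        antilinear_part_J[OF f]] trace_J_bracket_swap[of "antilinear_part J f"] by simp
  finally show ?thesis by simp
qed

lemma trace_J_bracket_J_J:
  assumes "\<And>v. f (J v) = - J (f v)" "\<And>v. g (J v) = - J (g v)"
  shows "trace_J_bracket J (\<lambda>v. J (f v)) (\<lambda>v. J (g v)) = trace_J_bracket J f g"
  unfolding trace_J_bracket_def by (simp add: assms J_simps)

end

section \<open>Hermitian Lie algebras\<close>

definition nijenhuis :: "'n::finite brkt \<Rightarrow> (real^'n \<Rightarrow> real^'n) \<Rightarrow> 'n brkt" where
  "nijenhuis mu J X Y = mu (J X) (J Y) - mu X Y - J (mu (J X) Y) - J (mu X (J Y))"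

definition hermitian_form :: "(real^'n::finite \<Rightarrow> real^'n \<Rightarrow> real) \<Rightarrow> (real^'n \<Rightarrow> real^'n) \<Rightarrow> bool" where
  "hermitian_form om J \<longleftrightarrow> nondegenerate om \<and> (\<forall>X Y. om X Y = - om Y X) \<and>
     (\<forall>X Y. om (J X) (J Y) = om X Y) \<and> (\<forall>X. X \<noteq> 0 \<longrightarrow> om X (J X) > 0)"

lemma hermitian_lie_algebra_iff:
  "hermitian_lie_algebra mu J om \<longleftrightarrow> lie_bracket mu \<and> complex_structure J \<and> hermitian_form om J \<and>
     (\<forall>X Y. nijenhuis mu J X Y = 0)"
proof -
  have nij_iff: "nijenhuis mu J X Y = 0 \<longleftrightarrow> mu (J X) (J Y) = mu X Y + J (mu (J X) Y) + J (mu X (J Y))" for X Y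
    by (simp add: nijenhuis_def diff_diff_eq)
  show ?thesis
    unfolding hermitian_lie_algebra_def complex_structure_def hermitian_form_def nondegenerate_def
    by (simp only: nij_iff) (intro iffI; elim conjE; intro conjI; assumption)
qed

lemma hermitian_form_nondegenerate: "hermitian_form om J \<Longrightarrow> nondegenerate om"
  unfolding hermitian_form_def by (elim conjE)

lemma hermitian_form_antisym: "hermitian_form om J \<Longrightarrow> om X Y = - om Y X"
  unfolding hermitian_form_def by (elim conjE allE) assumption

lemma hermitian_form_J_invariant: "hermitian_form om J \<Longrightarrow> om (J X) (J Y) = om X Y"
  unfolding hermitian_form_def by (elim conjE allE) assumption

lemma hermitian_form_positive: "hermitian_form om J \<Longrightarrow> X \<noteq> 0 \<Longrightarrow> om X (J X) > 0"
  unfolding hermitian_form_def by (elim conjE allE impE)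

lemma lie_bracket_antisym: "lie_bracket mu \<Longrightarrow> mu X Y = - mu Y X"
  unfolding lie_bracket_def by (elim conjE allE) assumption

lemma lie_bracket_jacobi: "lie_bracket mu \<Longrightarrow> mu X (mu Y Z) + mu Y (mu Z X) + mu Z (mu X Y) = 0"
  unfolding lie_bracket_def by (elim conjE allE) assumption

lemma lie_bracket_bilinear: "lie_bracket mu \<Longrightarrow> bilinear mu"
  unfolding lie_bracket_def by (elim conjE)

lemma lie_bracket_ad_bracket:
  assumes "lie_bracket mu"
  shows "mu (mu a b) v = mu a (mu b v) - mu b (mu a v)"
proof -
  have "mu b (mu v a) = - mu b (mu a v)"
    using lie_bracket_antisym[OF assms, of v a] by (simp add: bilinear_rneg[OF lie_bracket_bilinear[OF assms]])
  moreover have "mu v (mu a b) = - mu (mu a b) v" by (rule lie_bracket_antisym[OF assms])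
  ultimately show ?thesis using lie_bracket_jacobi[OF assms, of a b v] by (simp add: algebra_simps)
qed

lemma map_trace_ad_bracket:
  assumes "lie_bracket mu"
  shows "map_trace (mu (mu a b)) = 0"
proof -
  have mu: "bilinear mu" by (rule lie_bracket_bilinear[OF assms])
  have "mu (mu a b) = (\<lambda>v. mu a (mu b v) - mu b (mu a v))"
    by (simp add: fun_eq_iff lie_bracket_ad_bracket[OF assms])
  then show ?thesis
    using map_trace_comp_commute[OF bilinear_linear_right[OF mu] bilinear_linear_right[OF mu], of a b]
    by (simp add: map_trace_diff)
qed

definition nijenhuis_op :: "'n::finite brkt \<Rightarrow> (real^'n \<Rightarrow> real^'n) \<Rightarrow> real^'n \<Rightarrow> real^'n \<Rightarrow> real^'n" where
  "nijenhuis_op n J X v = -(1/2) *\<^sub>R n X (J v)"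

definition nijenhuis_trace_term :: "'n::finite brkt \<Rightarrow> (real^'n \<Rightarrow> real^'n) \<Rightarrow> 'n brkt \<Rightarrow> real^'n \<Rightarrow> real^'n \<Rightarrow> real" where
  "nijenhuis_trace_term mu J n X Y =
     trace_J_bracket J (antilinear_part J (mu (J X))) (nijenhuis_op n J Y)
   + trace_J_bracket J (nijenhuis_op n J X) (\<lambda>v. J (antilinear_part J (mu Y) v))"

definition ricci_J_defect :: "'n::finite brkt \<Rightarrow> (real^'n \<Rightarrow> real^'n) \<Rightarrow> 'n brkt \<Rightarrow> real^'n \<Rightarrow> real^'n \<Rightarrow> real" where
  "ricci_J_defect mu J n X Y = -(1/2) * nijenhuis_trace_term mu J n X Y + (1/2) * map_trace (mu (J (n X Y)))"

definition ricci_J_commutator ::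
  "'n::finite brkt \<Rightarrow> (real^'n \<Rightarrow> real^'n) \<Rightarrow> (real^'n \<Rightarrow> real^'n \<Rightarrow> real) \<Rightarrow> 'n brkt \<Rightarrow> real^'n \<Rightarrow> real^'n" where
  "ricci_J_commutator mu J om n X = dual_vector om (\<lambda>Y. ricci_J_defect mu J n X (- J Y))"

context complex_structure
begin

lemma linear_nijenhuis_op: "linear (n X) \<Longrightarrow> linear (nijenhuis_op n J X)"
  unfolding nijenhuis_op_def by (rule linearI) (simp_all add: linear_add linear_scale J_simps)

lemma linear_nijenhuis_right: "bilinear mu \<Longrightarrow> linear (nijenhuis mu J X)"
  unfolding nijenhuis_def
  by (rule linearI) (simp_all add: bilinear_radd bilinear_rmul J_simps algebra_simps)

lemma antilinear_part_ad_J: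
  assumes "bilinear mu"
  shows "antilinear_part J (mu (J X)) = (\<lambda>v. J (antilinear_part J (mu X) v) + nijenhuis_op (nijenhuis mu J) J X v)"
  by (simp add: fun_eq_iff antilinear_part_def nijenhuis_op_def nijenhuis_def J_simps
      bilinear_rneg[OF assms] algebra_simps)

lemma trace_J_bracket_ad_J:
  assumes mu: "bilinear mu"
  shows "trace_J_bracket J (mu (J X)) (mu (J Y)) =
    trace_J_bracket J (mu X) (mu Y) + nijenhuis_trace_term mu J (nijenhuis mu J) X Y"
proof -
  let ?A = "\<lambda>Z. antilinear_part J (mu Z)" and ?S = "nijenhuis_op (nijenhuis mu J) J"
  have ad: "linear (mu Z)" for Z by (rule bilinear_linear_right[OF mu])
  have A: "linear (?A Z)" "\<And>v. ?A Z (J v) = - J (?A Z v)" for Z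
    by (simp_all add: linear_antilinear_part antilinear_part_J ad)
  have JA: "linear (\<lambda>v. J (?A Z v))" for Z
    using linear_compose[OF A(1) linear_J] by (simp add: o_def)
  have S: "linear (?S Z)" for Z by (rule linear_nijenhuis_op[OF linear_nijenhuis_right[OF mu]])
  have "trace_J_bracket J (mu (J X)) (mu (J Y)) = trace_J_bracket J (?A (J X)) (?A (J Y))"
    by (rule trace_J_bracket_antilinear_parts[OF ad ad])
  also have "\<dots> = trace_J_bracket J (?A (J X)) (\<lambda>v. J (?A Y v))
      + trace_J_bracket J (?A (J X)) (?S Y)"
    by (simp add: antilinear_part_ad_J[OF mu, of Y] trace_J_bracket_add_right A)
  also have "trace_J_bracket J (?A (J X)) (\<lambda>v. J (?A Y v)) =
      trace_J_bracket J (\<lambda>v. J (?A X v)) (\<lambda>v. J (?A Y v)) + trace_J_bracket J (?S X) (\<lambda>v. J (?A Y v))"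
    by (simp add: antilinear_part_ad_J[OF mu, of X] trace_J_bracket_add_left JA)
  also have "trace_J_bracket J (\<lambda>v. J (?A X v)) (\<lambda>v. J (?A Y v)) = trace_J_bracket J (?A X) (?A Y)"
    by (rule trace_J_bracket_J_J; rule A(2))
  also have "\<dots> = trace_J_bracket J (mu X) (mu Y)"
    by (rule trace_J_bracket_antilinear_parts[OF ad ad, symmetric])
  finally show ?thesis by (simp add: nijenhuis_trace_term_def)
qed

text \<open>The Chern-Ricci form is \<open>J\<close>-invariant up to terms linear in the Nijenhuis tensor.\<close>

lemma ricci_functional_J_J:
  assumes mu: "lie_bracket mu"
  shows "ricci_functional mu J (mu (J X) (J Y)) - ricci_functional mu J (mu X Y) =
    ricci_J_defect mu J (nijenhuis mu J) X Y"
proof -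
  have bil: "bilinear mu" by (rule lie_bracket_bilinear[OF mu])
  have "map_trace (\<lambda>v. J (mu (mu a b) v)) = trace_J_bracket J (mu a) (mu b)" for a b
    by (simp add: trace_J_bracket_def lie_bracket_ad_bracket[OF mu])
  then have "map_trace (\<lambda>v. J (mu (mu (J X) (J Y)) v)) =
      map_trace (\<lambda>v. J (mu (mu X Y) v)) + nijenhuis_trace_term mu J (nijenhuis mu J) X Y"
    by (simp add: trace_J_bracket_ad_J[OF bil])
  moreover have "J (mu (J X) (J Y)) = J (mu X Y) - mu (J X) Y - mu X (J Y) + J (nijenhuis mu J X Y)"
    by (simp add: nijenhuis_def J_simps)
  then have "mu (J (mu (J X) (J Y))) = (\<lambda>v. mu (J (mu X Y)) v - mu (mu (J X) Y) v
      - mu (mu X (J Y)) v + mu (J (nijenhuis mu J X Y)) v)"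
    by (simp add: fun_eq_iff bilinear_ladd[OF bil] bilinear_lsub[OF bil])
  then have "map_trace (mu (J (mu (J X) (J Y)))) =
      map_trace (mu (J (mu X Y))) + map_trace (mu (J (nijenhuis mu J X Y)))"
    by (simp add: map_trace_add map_trace_diff map_trace_ad_bracket[OF mu])
  ultimately show ?thesis
    unfolding ricci_functional_def ricci_J_defect_def by (simp add: algebra_simps)
qed

lemma ricci_J_commutator_zero:
  assumes "bilinear mu"
  shows "ricci_J_commutator mu J om (\<lambda>_ _. 0) X = 0"
proof -
  have "ricci_J_defect mu J (\<lambda>_ _. 0) X Y = 0" for Y
    by (simp add: ricci_J_defect_def nijenhuis_trace_term_def nijenhuis_op_def trace_J_bracket_def
        antilinear_part_def J_simps bilinear_lzero[OF assms] bilinear_rzero[OF assms] map_trace_def)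
  then show ?thesis by (simp add: ricci_J_commutator_def dual_vector_def)
qed

lemma hermitian_form_J_left:
  assumes "hermitian_form om J"
  shows "om (J U) Y = - om U (J Y)"
proof -
  have om: "bilinear om" by (rule nondegenerate_bilinear[OF hermitian_form_nondegenerate[OF assms]])
  have "om (J U) Y = om (J (J U)) (J Y)" by (rule hermitian_form_J_invariant[OF assms, symmetric])
  also have "\<dots> = - om U (J Y)" by (simp add: J_J bilinear_lneg[OF om])
  finally show ?thesis .
qed

lemma chern_ricci_op_J_commutator:
  assumes om: "hermitian_form om J" and mu: "lie_bracket mu"
  shows "chern_ricci_op mu J om (J X) - J (chern_ricci_op mu J om X) =
    ricci_J_commutator mu J om (nijenhuis mu J) X"
proof -
  have nd: "nondegenerate om" by (rule hermitian_form_nondegenerate[OF om])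
  have bil: "bilinear mu" by (rule lie_bracket_bilinear[OF mu])
  note pairing = chern_ricci_op_pairing[OF nd bil linear_J]
  have ric: "linear (ricci_functional mu J)" by (rule linear_ricci_functional[OF bil linear_J])
  define f where "f Y = ricci_functional mu J (mu (J X) Y) + ricci_functional mu J (mu X (J Y))" for Y
  have "linear f" unfolding f_def
    by (rule linearI) (simp_all add: bilinear_radd[OF bil] bilinear_rmul[OF bil] J_simps
        linear_add[OF ric] linear_scale[OF ric] algebra_simps)
  moreover have "om (chern_ricci_op mu J om (J X) - J (chern_ricci_op mu J om X)) Y = f Y" for Y
    by (simp add: bilinear_lsub[OF nondegenerate_bilinear[OF nd]] hermitian_form_J_left[OF om] pairing f_def)
  ultimately have "chern_ricci_op mu J om (J X) - J (chern_ricci_op mu J om X) = dual_vector om f"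
    by (intro dual_vector_unique[OF nd]) auto
  also have "f = (\<lambda>Y. ricci_J_defect mu J (nijenhuis mu J) X (- J Y))"
    by (simp add: fun_eq_iff f_def ricci_functional_J_J[OF mu, symmetric] J_simps
        bilinear_rneg[OF bil] linear_neg[OF ric])
  finally show ?thesis by (simp add: ricci_J_commutator_def)
qed

end

section \<open>Variation of the Nijenhuis tensor\<close>

definition nijenhuis_commutator_term ::
  "'n::finite brkt \<Rightarrow> (real^'n \<Rightarrow> real^'n) \<Rightarrow> (real^'n \<Rightarrow> real^'n) \<Rightarrow> 'n brkt" where
  "nijenhuis_commutator_term mu J C X Y = mu (C X) (J Y) + mu (J X) (C Y) - J (mu (C X) Y) - J (mu X (C Y))
     - C (mu (J X) Y) - C (mu X (J Y))"

definition nijenhuis_evolution ::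
  "'n::finite brkt \<Rightarrow> (real^'n \<Rightarrow> real^'n) \<Rightarrow> (real^'n \<Rightarrow> real^'n \<Rightarrow> real) \<Rightarrow> 'n brkt \<Rightarrow> 'n brkt" where
  "nijenhuis_evolution mu J om n X Y = delta n (chern_ricci_op mu J om) X Y
     + nijenhuis_commutator_term mu J (ricci_J_commutator mu J om n) X Y"

lemma tendsto_ricci_J_commutator:
  fixes mu :: "'a \<Rightarrow> 'n::finite brkt"
  assumes ev: "eventually (\<lambda>t. bilinear (mu t)) F"
    and conv: "\<And>X Y. ((\<lambda>t. mu t X Y) \<longlongrightarrow> lam X Y) F" and lam: "bilinear lam"
    and J: "linear J" and n: "bilinear n" and z: "(z \<longlongrightarrow> z0) F"
  shows "((\<lambda>t. ricci_J_commutator (mu t) J om n (z t)) \<longlongrightarrow> ricci_J_commutator lam J om n z0) F"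
  unfolding ricci_J_commutator_def ricci_J_defect_def nijenhuis_trace_term_def trace_J_bracket_def
    antilinear_part_def nijenhuis_op_def
  by (intro tendsto_dual_vector tendsto_intros tendsto_map_trace tendsto_linear[OF J]
      tendsto_bracket[OF ev conv lam] tendsto_bilinear[OF n] tendsto_const z)

context complex_structure
begin

lemma bilinear_nijenhuis:
  assumes mu: "bilinear mu"
  shows "bilinear (nijenhuis mu J)"
  unfolding bilinear_def nijenhuis_def
  by (intro allI conjI linearI) (simp_all add: bilinear_ladd[OF mu] bilinear_radd[OF mu]
      bilinear_lmul[OF mu] bilinear_rmul[OF mu] J_simps algebra_simps)

lemma nijenhuis_delta:
  assumes mu: "bilinear mu" and A: "linear A"
  shows "nijenhuis (delta mu A) J X Y =
    delta (nijenhuis mu J) A X Y + nijenhuis_commutator_term mu J (\<lambda>X. A (J X) - J (A X)) X Y"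
  unfolding nijenhuis_def delta_def nijenhuis_commutator_term_def
  by (simp add: bilinear_ladd[OF mu] bilinear_radd[OF mu] bilinear_lsub[OF mu] bilinear_rsub[OF mu]
      linear_add[OF A] linear_diff[OF A] J_simps algebra_simps)

lemma nijenhuis_commutator_term_add:
  "bilinear mu \<Longrightarrow> nijenhuis_commutator_term mu J (\<lambda>X. C1 X + C2 X) X Y =
    nijenhuis_commutator_term mu J C1 X Y + nijenhuis_commutator_term mu J C2 X Y"
  unfolding nijenhuis_commutator_term_def
  by (simp add: bilinear_ladd bilinear_radd J_simps algebra_simps)

lemma nijenhuis_commutator_term_scale:
  "bilinear mu \<Longrightarrow> nijenhuis_commutator_term mu J (\<lambda>X. c *\<^sub>R C X) X Y =
    c *\<^sub>R nijenhuis_commutator_term mu J C X Y"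
  unfolding nijenhuis_commutator_term_def
  by (simp add: bilinear_lmul bilinear_rmul J_simps algebra_simps)

lemma ricci_J_defect_add:
  assumes mu: "bilinear mu" and n: "bilinear n1" "bilinear n2"
  shows "ricci_J_defect mu J (\<lambda>X Y. n1 X Y + n2 X Y) X Y =
    ricci_J_defect mu J n1 X Y + ricci_J_defect mu J n2 X Y"
proof -
  have A: "linear (antilinear_part J (mu Z))" "linear (\<lambda>v. J (antilinear_part J (mu Z) v))" for Z
    using linear_antilinear_part[OF bilinear_linear_right[OF mu]]
    by (auto intro: linear_compose[OF _ linear_J, unfolded o_def])
  have S: "linear (nijenhuis_op n1 J Z)" "linear (nijenhuis_op n2 J Z)" for Z
    by (intro linear_nijenhuis_op bilinear_linear_right n)+
  have "nijenhuis_op (\<lambda>X Y. n1 X Y + n2 X Y) J Z = (\<lambda>v. nijenhuis_op n1 J Z v + nijenhuis_op n2 J Z v)" for Z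
    by (simp add: fun_eq_iff nijenhuis_op_def algebra_simps)
  moreover have "mu (J (n1 X Y + n2 X Y)) = (\<lambda>v. mu (J (n1 X Y)) v + mu (J (n2 X Y)) v)"
    by (simp add: fun_eq_iff J_simps bilinear_ladd[OF mu])
  ultimately show ?thesis
    by (simp add: ricci_J_defect_def nijenhuis_trace_term_def trace_J_bracket_add_left
        trace_J_bracket_add_right A S map_trace_add algebra_simps)
qed

lemma ricci_J_defect_scale:
  assumes mu: "bilinear mu" and n: "bilinear n"
  shows "ricci_J_defect mu J (\<lambda>X Y. c *\<^sub>R n X Y) X Y = c * ricci_J_defect mu J n X Y"
proof -
  have A: "linear (antilinear_part J (mu Z))" "linear (\<lambda>v. J (antilinear_part J (mu Z) v))" for Z
    using linear_antilinear_part[OF bilinear_linear_right[OF mu]]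
    by (auto intro: linear_compose[OF _ linear_J, unfolded o_def])
  have S: "linear (nijenhuis_op n J Z)" for Z
    by (intro linear_nijenhuis_op bilinear_linear_right n)
  have "nijenhuis_op (\<lambda>X Y. c *\<^sub>R n X Y) J Z = (\<lambda>v. c *\<^sub>R nijenhuis_op n J Z v)" for Z
    by (simp add: fun_eq_iff nijenhuis_op_def)
  moreover have "mu (J (c *\<^sub>R n X Y)) = (\<lambda>v. c *\<^sub>R mu (J (n X Y)) v)"
    by (simp add: fun_eq_iff J_simps bilinear_lmul[OF mu])
  ultimately show ?thesis
    by (simp add: ricci_J_defect_def nijenhuis_trace_term_def trace_J_bracket_scale_left
        trace_J_bracket_scale_right A S map_trace_scale algebra_simps)
qed

lemma ricci_J_commutator_add:
  "bilinear mu \<Longrightarrow> bilinear n1 \<Longrightarrow> bilinear n2 \<Longrightarrow>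
    ricci_J_commutator mu J om (\<lambda>X Y. n1 X Y + n2 X Y) X =
    ricci_J_commutator mu J om n1 X + ricci_J_commutator mu J om n2 X"
  by (simp add: ricci_J_commutator_def ricci_J_defect_add dual_vector_add)

lemma ricci_J_commutator_scale:
  "bilinear mu \<Longrightarrow> bilinear n \<Longrightarrow>
    ricci_J_commutator mu J om (\<lambda>X Y. c *\<^sub>R n X Y) X = c *\<^sub>R ricci_J_commutator mu J om n X"
  by (simp add: ricci_J_commutator_def ricci_J_defect_scale dual_vector_scale)

lemma nijenhuis_delta_chern_ricci_op:
  assumes om: "hermitian_form om J" and mu: "lie_bracket mu"
  shows "nijenhuis (delta mu (chern_ricci_op mu J om)) J = nijenhuis_evolution mu J om (nijenhuis mu J)"
proof -
  have "(\<lambda>X. chern_ricci_op mu J om (J X) - J (chern_ricci_op mu J om X)) =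
      ricci_J_commutator mu J om (nijenhuis mu J)"
    using chern_ricci_op_J_commutator[OF om mu] by (simp add: fun_eq_iff)
  moreover note linear_chern_ricci_op[OF hermitian_form_nondegenerate[OF om] lie_bracket_bilinear[OF mu] linear_J]
  ultimately show ?thesis
    by (simp add: fun_eq_iff nijenhuis_evolution_def nijenhuis_delta[OF lie_bracket_bilinear[OF mu]])
qed

lemma nijenhuis_evolution_add:
  assumes mu: "bilinear mu" "linear (chern_ricci_op mu J om)" and n: "bilinear n1" "bilinear n2"
  shows "nijenhuis_evolution mu J om (\<lambda>X Y. n1 X Y + n2 X Y) =
    (\<lambda>X Y. nijenhuis_evolution mu J om n1 X Y + nijenhuis_evolution mu J om n2 X Y)"
proof -
  have rjc: "ricci_J_commutator mu J om (\<lambda>X Y. n1 X Y + n2 X Y) =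
      (\<lambda>X. ricci_J_commutator mu J om n1 X + ricci_J_commutator mu J om n2 X)"
    by (simp add: fun_eq_iff ricci_J_commutator_add mu n)
  show ?thesis
    unfolding nijenhuis_evolution_def rjc
    by (simp add: fun_eq_iff delta_add mu nijenhuis_commutator_term_add)
qed

lemma nijenhuis_evolution_scale:
  assumes mu: "bilinear mu" "linear (chern_ricci_op mu J om)" and n: "bilinear n"
  shows "nijenhuis_evolution mu J om (\<lambda>X Y. c *\<^sub>R n X Y) = (\<lambda>X Y. c *\<^sub>R nijenhuis_evolution mu J om n X Y)"
proof -
  have rjc: "ricci_J_commutator mu J om (\<lambda>X Y. c *\<^sub>R n X Y) = (\<lambda>X. c *\<^sub>R ricci_J_commutator mu J om n X)"
    by (simp add: fun_eq_iff ricci_J_commutator_scale mu n)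
  show ?thesis
    unfolding nijenhuis_evolution_def rjc
    by (simp add: fun_eq_iff delta_scale mu nijenhuis_commutator_term_scale scaleR_add_right)
qed

end

section \<open>Chern-Ricci operators that are derivations\<close>

context complex_structure
begin

lemma chern_ricci_op_commutes_J:
  assumes om: "hermitian_form om J" and mu: "lie_bracket mu" and nij: "\<And>X Y. nijenhuis mu J X Y = 0"
  shows "chern_ricci_op mu J om (J X) = J (chern_ricci_op mu J om X)"
proof -
  have "nijenhuis mu J = (\<lambda>_ _. 0)" by (simp add: fun_eq_iff nij)
  then show ?thesis
    using chern_ricci_op_J_commutator[OF om mu, of X] ricci_J_commutator_zero[OF lie_bracket_bilinear[OF mu]]
    by simp
qed

lemma ricci_functional_derivation:
  assumes mu: "bilinear mu" and D: "linear D" "\<And>X. D (J X) = J (D X)"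
    and derivation: "\<And>X Y. delta mu D X Y = 0"
  shows "ricci_functional mu J (D Z) = 0"
proof -
  have ad: "linear (mu X)" for X by (rule bilinear_linear_right[OF mu])
  have ad_D: "mu (D X) = (\<lambda>v. D (mu X v) - mu X (D v))" for X
    using derivation by (simp add: fun_eq_iff delta_def algebra_simps)
  have "map_trace (\<lambda>x. J (mu Z (D x))) = map_trace (\<lambda>x. D (J (mu Z x)))"
    using map_trace_comp_commute[OF linear_compose[OF ad linear_J, unfolded o_def] D(1)] by simp
  then have "map_trace (\<lambda>x. J (mu (D Z) x)) = 0"
    by (simp add: ad_D J_simps map_trace_diff D(2))
  moreover have "map_trace (mu (J (D Z))) = 0"
    using map_trace_comp_commute[OF D(1) ad, of "J Z"] by (simp add: ad_D flip: D(2) add: map_trace_diff)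
  ultimately show ?thesis by (simp add: ricci_functional_def)
qed

end

text \<open>As \<open>P\<close> is an \<open>\<omega>\<close>-symmetric derivation and the Chern-Ricci form vanishes on its image,
  \<open>\<omega>(P\<^sup>2 X, Y) = - \<omega>(P X, P Y) = - \<omega>(P\<^sup>2 X, Y)\<close>; so \<open>P\<^sup>2 = 0\<close>, and then
  \<open>\<omega>(P X, J P X) = \<omega>(X, J P\<^sup>2 X) = 0\<close> forces \<open>P = 0\<close>.\<close>

lemma chern_ricci_op_eq_0_if_derivation:
  assumes herm: "hermitian_lie_algebra lam J om"
    and derivation: "\<And>X Y. delta lam (chern_ricci_op lam J om) X Y = 0"
  shows "chern_ricci_op lam J om X = 0"
proof -
  have lam: "lie_bracket lam" and J: "complex_structure J" and om: "hermitian_form om J"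
    and nij: "\<And>X Y. nijenhuis lam J X Y = 0"
    using herm by (simp_all add: hermitian_lie_algebra_iff)
  interpret complex_structure J by (rule J)
  have nd: "nondegenerate om" by (rule hermitian_form_nondegenerate[OF om])
  have bil: "bilinear lam" by (rule lie_bracket_bilinear[OF lam])
  define D where "D = chern_ricci_op lam J om"
  have D: "linear D" unfolding D_def by (rule linear_chern_ricci_op[OF nd bil linear_J])
  have pairing: "om (D X) Y = ricci_functional lam J (lam X Y)" for X Y
    unfolding D_def by (rule chern_ricci_op_pairing[OF nd bil linear_J])
  have DJ: "D (J X) = J (D X)" for X
    unfolding D_def by (rule chern_ricci_op_commutes_J[OF om lam nij])
  have ric_D: "ricci_functional lam J (D Z) = 0" for Z
    by (rule ricci_functional_derivation[OF bil D DJ derivation[folded D_def]])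
  have ric: "linear (ricci_functional lam J)" by (rule linear_ricci_functional[OF bil linear_J])
  have symmetric: "om (D X) Y = om X (D Y)" for X Y
    by (simp add: pairing hermitian_form_antisym[OF om, of X] lie_bracket_antisym[OF lam, of X]
        linear_neg[OF ric])
  have DD: "D (D X) = 0" for X
  proof (rule nondegenerate_eq_0[OF nd])
    fix Y
    have "lam (D X) Y = D (lam X Y) - lam X (D Y)"
      using derivation[of X Y] by (simp add: D_def delta_def algebra_simps)
    then have "om (D (D X)) Y = ricci_functional lam J (D (lam X Y)) - ricci_functional lam J (lam X (D Y))"
      by (simp add: pairing linear_diff[OF ric])
    also have "\<dots> = - om (D X) (D Y)" by (simp add: ric_D pairing)
    finally show "om (D (D X)) Y = 0" using symmetric[of "D X" Y] by simp
  qed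
  show ?thesis
  proof (rule ccontr)
    assume "chern_ricci_op lam J om X \<noteq> 0"
    then have "om (D X) (J (D X)) > 0" by (simp add: D_def hermitian_form_positive[OF om])
    moreover have "om (D X) (J (D X)) = 0"
      by (simp add: symmetric DJ DD J_simps bilinear_rzero[OF nondegenerate_bilinear[OF nd]])
    ultimately show False by simp
  qed
qed

section \<open>Linear ODEs and limits of derivatives\<close>

lemma uniform_bound_linear_family:
  fixes L :: "real \<Rightarrow> 'v::euclidean_space \<Rightarrow> 'w::real_normed_vector"
  assumes "compact S" and lin: "\<And>t. t \<in> S \<Longrightarrow> linear (L t)"
    and cont: "\<And>v. continuous_on S (\<lambda>t. L t v)"
  shows "\<exists>K\<ge>0. \<forall>t\<in>S. \<forall>v. norm (L t v) \<le> K * norm v"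
proof -
  have "\<forall>b. \<exists>M>0. \<forall>t\<in>S. norm (L t b) \<le> M"
  proof
    fix b
    have "bounded ((\<lambda>t. L t b) ` S)"
      by (rule compact_imp_bounded, rule compact_continuous_image[OF cont assms(1)])
    then show "\<exists>M>0. \<forall>t\<in>S. norm (L t b) \<le> M" by (auto simp: bounded_pos)
  qed
  then obtain M where M: "\<And>b. M b > 0" "\<And>b t. t \<in> S \<Longrightarrow> norm (L t b) \<le> M b" by metis
  define K where "K = (\<Sum>b\<in>Basis. M b)"
  have K0: "K \<ge> 0" unfolding K_def by (intro sum_nonneg) (use M(1) in \<open>auto intro: less_imp_le\<close>)
  have "norm (L t v) \<le> K * norm v" if t: "t \<in> S" for t v
  proof -
    have "L t v = L t (\<Sum>b\<in>Basis. (v \<bullet> b) *\<^sub>R b)" by (simp add: euclidean_representation)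
    also have "\<dots> = (\<Sum>b\<in>Basis. (v \<bullet> b) *\<^sub>R L t b)"
      using lin t by (simp add: linear_sum linear_scale)
    finally have "norm (L t v) \<le> (\<Sum>b\<in>Basis. norm ((v \<bullet> b) *\<^sub>R L t b))"
      by (metis norm_sum)
    also have "\<dots> \<le> (\<Sum>b\<in>Basis. norm v * M b)"
    proof (rule sum_mono)
      fix b :: 'v assume "b \<in> Basis"
      then have "\<bar>v \<bullet> b\<bar> \<le> norm v" by (rule Basis_le_norm)
      then show "norm ((v \<bullet> b) *\<^sub>R L t b) \<le> norm v * M b"
        using M(2)[OF t, of b] by (simp add: mult_mono')
    qed
    also have "\<dots> = K * norm v" by (simp add: K_def sum_distrib_left mult.commute)
    finally show ?thesis .
  qed
  then show ?thesis using K0 by blast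
qed

lemma le_initial_if_deriv_nonpos:
  fixes V V' :: "real \<Rightarrow> real"
  assumes t: "0 \<le> t" and der: "\<And>s. s \<in> {0..t} \<Longrightarrow> (V has_real_derivative V' s) (at s within {0..t})"
    and nonpos: "\<And>s. s \<in> {0..t} \<Longrightarrow> V' s \<le> 0"
  shows "V t \<le> V 0"
proof -
  have "\<exists>c\<in>{0..t}. V t - V 0 = (\<lambda>h. h * V' c) (t - 0)"
  proof (rule mvt_very_simple[OF t])
    fix s assume "0 \<le> s" "s \<le> t"
    then show "(V has_derivative (\<lambda>h. h * V' s)) (at s within {0..t})"
      using der[of s] by (simp add: has_field_derivative_def mult.commute[of _ "V' s"])
  qed
  then obtain c where "c \<in> {0..t}" "V t - V 0 = t * V' c" by auto
  moreover from this have "t * V' c \<le> 0" using t nonpos[of c] by (simp add: mult_nonneg_nonpos)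
  ultimately show ?thesis by simp
qed

text \<open>The energy \<open>e\<^sup>-\<^sup>2\<^sup>K\<^sup>t |x t|\<^sup>2\<close> is nonincreasing when \<open>K\<close> bounds the
  operator norms of \<open>L t\<close>.\<close>

lemma linear_ode_zero_on_interval:
  fixes x :: "real \<Rightarrow> 'v::euclidean_space"
  assumes x0: "x 0 = 0"
    and der: "\<And>t. t \<in> {0..T} \<Longrightarrow> (x has_vector_derivative L t (x t)) (at t within {0..T})"
    and lin: "\<And>t. t \<in> {0..T} \<Longrightarrow> linear (L t)"
    and cont: "\<And>v. continuous_on {0..T} (\<lambda>t. L t v)"
    and t: "t \<in> {0..T}"
  shows "x t = 0"
proof -
  obtain K where K: "K \<ge> 0" "\<And>t v. t \<in> {0..T} \<Longrightarrow> norm (L t v) \<le> K * norm v"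
    using uniform_bound_linear_family[OF compact_Icc] lin cont by blast
  define V where "V t = exp (-(2*K)*t) * (x t \<bullet> x t)" for t
  define V' where "V' t = exp (-(2*K)*t) * (2 * (x t \<bullet> L t (x t))) - (2*K) * exp (-(2*K)*t) * (x t \<bullet> x t)" for t
  have "V t \<le> V 0"
  proof (rule le_initial_if_deriv_nonpos[where V' = V'])
    fix s assume s: "s \<in> {0..t}"
    then have s': "s \<in> {0..T}" using t by auto
    have "((\<lambda>t. x t \<bullet> x t) has_vector_derivative (x s \<bullet> L s (x s) + L s (x s) \<bullet> x s)) (at s within {0..T})"
      by (rule bounded_bilinear.has_vector_derivative[OF bounded_bilinear_inner der[OF s'] der[OF s']])
    then have "((\<lambda>t. x t \<bullet> x t) has_real_derivative (2 * (x s \<bullet> L s (x s)))) (at s within {0..T})"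
      by (simp add: has_real_derivative_iff_has_vector_derivative inner_commute)
    moreover have "((\<lambda>u. exp (- (2 * K) * u)) has_real_derivative exp (- (2 * K) * s) * (- (2 * K))) (at s within {0..T})"
      by (auto intro!: derivative_eq_intros)
    ultimately have "(V has_real_derivative V' s) (at s within {0..T})"
      unfolding V_def V'_def using DERIV_mult by (fastforce simp: algebra_simps)
    then show "(V has_real_derivative V' s) (at s within {0..t})"
      by (rule DERIV_subset) (use t in auto)
    have "x s \<bullet> L s (x s) \<le> norm (x s) * norm (L s (x s))" by (rule norm_cauchy_schwarz)
    also have "\<dots> \<le> norm (x s) * (K * norm (x s))" using K(2)[OF s'] by (simp add: mult_left_mono)
    also have "\<dots> = K * (x s \<bullet> x s)" by (simp add: power2_norm_eq_inner[symmetric] power2_eq_square)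
    finally show "V' s \<le> 0" unfolding V'_def by (simp add: algebra_simps)
  qed (use t in auto)
  then have "x t \<bullet> x t \<le> 0" by (simp add: V_def x0 mult_le_0_iff)
  then show ?thesis by (metis inner_ge_zero inner_eq_zero_iff order_antisym)
qed

lemma linear_ode_zero_on_nonneg:
  fixes x :: "real \<Rightarrow> 'v::euclidean_space"
  assumes x0: "x 0 = 0"
    and der: "\<And>t. t \<ge> 0 \<Longrightarrow> (x has_vector_derivative L t (x t)) (at t within {0..})"
    and lin: "\<And>t. t \<ge> 0 \<Longrightarrow> linear (L t)"
    and cont: "\<And>v. continuous_on {0..} (\<lambda>t. L t v)"
    and t: "t \<ge> 0"
  shows "x t = 0"
proof (rule linear_ode_zero_on_interval[where L = L and T = t])
  show "(x has_vector_derivative L s (x s)) (at s within {0..t})" if "s \<in> {0..t}" for s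
    using der[of s] that by (auto intro: has_vector_derivative_within_subset)
  show "continuous_on {0..t} (\<lambda>s. L s v)" for v
    by (rule continuous_on_subset[OF cont]) auto
qed (use x0 lin t in auto)

lemma linear_ode_zero_on_nonpos:
  fixes x :: "real \<Rightarrow> 'v::euclidean_space"
  assumes x0: "x 0 = 0"
    and der: "\<And>t. t \<le> 0 \<Longrightarrow> (x has_vector_derivative L t (x t)) (at t within {..0})"
    and lin: "\<And>t. t \<le> 0 \<Longrightarrow> linear (L t)"
    and cont: "\<And>v. continuous_on {..0} (\<lambda>t. L t v)"
    and t: "t \<le> 0"
  shows "x t = 0"
proof -
  have "x (- (- t)) = 0"
  proof (rule linear_ode_zero_on_nonneg[where x = "\<lambda>s. x (- s)" and L = "\<lambda>s v. - L (- s) v"])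
    fix s :: real assume s: "s \<ge> 0"
    have d1: "(uminus has_vector_derivative (-1)) (at s within {0..})"
      by (auto intro!: derivative_eq_intros)
    have "(x has_vector_derivative L (-s) (x (-s))) (at (-s) within uminus ` {0..})"
      using der[of "- s"] s by (auto intro: has_vector_derivative_within_subset)
    from vector_diff_chain_within[OF d1 this]
    show "((\<lambda>s. x (- s)) has_vector_derivative - L (- s) (x (- s))) (at s within {0..})"
      by (simp add: o_def)
    show "linear (\<lambda>v. - L (- s) v)" using lin[of "- s"] s by (simp add: linear_compose_neg)
  next
    show "continuous_on {0..} (\<lambda>s. - L (- s) v)" for v
      by (intro continuous_intros continuous_on_compose2[OF cont[of v]]) auto
  qed (use x0 t in auto)
  then show ?thesis by simp
qed

lemma deriv_tendsto_at_top_not_pos: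
  fixes f g :: "real \<Rightarrow> real"
  assumes der: "\<forall>t\<ge>0. (f has_real_derivative g t) (at t within {0..})"
    and g: "(g \<longlongrightarrow> c) at_top" and f: "(f \<longlongrightarrow> l) at_top"
  shows "\<not> c > 0"
proof
  assume c: "c > 0"
  have "eventually (\<lambda>t. g t > c/2) at_top"
    using order_tendstoD(1)[OF g, of "c/2"] c by simp
  then obtain t1 where t1: "\<And>t. t \<ge> t1 \<Longrightarrow> g t > c/2" by (auto simp: eventually_at_top_linorder)
  define t0 where "t0 = max t1 0"
  have grow: "f t \<ge> f t0 + (t - t0) * (c/2)" if t: "t \<ge> t0" for t
  proof -
    have "\<exists>x\<in>{t0..t}. f t - f t0 = (\<lambda>h. h * g x) (t - t0)"
    proof (rule mvt_very_simple[OF t])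
      fix s assume s: "t0 \<le> s" "s \<le> t"
      have "s \<ge> 0" using s by (simp add: t0_def)
      then have "(f has_real_derivative g s) (at s within {0..})" using der by blast
      then have "(f has_real_derivative g s) (at s within {t0..t})"
        by (rule DERIV_subset) (auto simp: t0_def)
      then show "(f has_derivative (\<lambda>h. h * g s)) (at s within {t0..t})"
        by (simp add: has_field_derivative_def mult.commute[of _ "g s"])
    qed
    then obtain x where x: "x \<in> {t0..t}" "f t - f t0 = (t - t0) * g x" by auto
    have "g x > c/2" using x t1 by (auto simp: t0_def)
    then have "(t - t0) * (c/2) \<le> (t - t0) * g x" using x by (intro mult_left_mono) auto
    then show ?thesis using x by simp
  qed
  have "eventually (\<lambda>t. f t < l + 1) at_top"
    using order_tendstoD(2)[OF f, of "l+1"] by simp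
  then obtain t2 where t2: "\<And>t. t \<ge> t2 \<Longrightarrow> f t < l + 1" by (auto simp: eventually_at_top_linorder)
  define t where "t = max t2 t0 + (\<bar>l + 1 - f t0\<bar> + 1) / (c/2)"
  have tt: "t \<ge> t0" "t \<ge> t2" using c by (auto simp: t_def intro!: add_increasing2 divide_nonneg_pos)
  have "(t - t0) * (c/2) \<ge> ((\<bar>l + 1 - f t0\<bar> + 1) / (c/2)) * (c/2)"
    using c by (intro mult_right_mono) (auto simp: t_def)
  then have "(t - t0) * (c/2) \<ge> \<bar>l + 1 - f t0\<bar> + 1" using c by simp
  then have "f t \<ge> l + 2" using grow[OF tt(1)] by linarith
  then show False using t2[OF tt(2)] by simp
qed

lemma deriv_tendsto_at_top_eq_0:
  fixes f g :: "real \<Rightarrow> real"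
  assumes der: "\<forall>t\<ge>0. (f has_real_derivative g t) (at t within {0..})"
    and g: "(g \<longlongrightarrow> c) at_top" and f: "(f \<longlongrightarrow> l) at_top"
  shows "c = 0"
proof -
  have "\<not> c > 0" by (rule deriv_tendsto_at_top_not_pos[OF der g f])
  moreover have "\<not> -c > 0"
  proof (rule deriv_tendsto_at_top_not_pos[where f="\<lambda>t. - f t" and g="\<lambda>t. - g t"])
    show "\<forall>t\<ge>0. ((\<lambda>t. - f t) has_real_derivative - g t) (at t within {0..})"
      using der by (auto intro: DERIV_minus)
  qed (auto intro: tendsto_minus g f)
  ultimately show ?thesis by simp
qed

lemma vector_deriv_tendsto_at_top_eq_0:
  fixes f g :: "real \<Rightarrow> 'a::real_inner"
  assumes der: "\<forall>t\<ge>0. (f has_vector_derivative g t) (at t within {0..})"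
    and g: "(g \<longlongrightarrow> c) at_top" and f: "(f \<longlongrightarrow> l) at_top"
  shows "c = 0"
proof -
  have "c \<bullet> b = 0" for b
  proof (rule deriv_tendsto_at_top_eq_0[where l = "l \<bullet> b"])
    show "\<forall>t\<ge>0. ((\<lambda>t. f t \<bullet> b) has_real_derivative g t \<bullet> b) (at t within {0..})"
      unfolding has_real_derivative_iff_has_vector_derivative
      using der by (blast intro: bounded_linear.has_vector_derivative[OF bounded_linear_inner_left])
  qed (intro tendsto_intros g f)+
  then show ?thesis by (metis inner_eq_zero_iff)
qed

lemma vector_deriv_tendsto_at_bot_eq_0:
  fixes f g :: "real \<Rightarrow> 'a::real_inner"
  assumes der: "\<forall>t\<le>0. (f has_vector_derivative g t) (at t within {..0})"
    and g: "(g \<longlongrightarrow> c) at_bot" and f: "(f \<longlongrightarrow> l) at_bot"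
  shows "c = 0"
proof -
  have "- c = 0"
  proof (rule vector_deriv_tendsto_at_top_eq_0)
    show "\<forall>t\<ge>0. ((\<lambda>t. f (- t)) has_vector_derivative - g (- t)) (at t within {0..})"
    proof (intro allI impI)
      fix t :: real assume "t \<ge> 0"
      have d1: "(uminus has_vector_derivative (-1)) (at t within {0..})"
        by (auto intro!: derivative_eq_intros)
      have "(f has_vector_derivative g (-t)) (at (-t) within {..0})"
        using der \<open>t \<ge> 0\<close> by simp
      then have d2: "(f has_vector_derivative g (-t)) (at (-t) within uminus ` {0..})"
        by (rule has_vector_derivative_within_subset) auto
      show "((\<lambda>t. f (- t)) has_vector_derivative - g (- t)) (at t within {0..})"
        using vector_diff_chain_within[OF d1 d2] by (simp add: o_def)
    qed
    show "((\<lambda>t. - g (- t)) \<longlongrightarrow> - c) at_top"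
      by (intro tendsto_minus filterlim_compose[OF g] filterlim_uminus_at_bot_at_top)
    show "((\<lambda>t. f (- t)) \<longlongrightarrow> l) at_top"
      by (intro filterlim_compose[OF f] filterlim_uminus_at_bot_at_top)
  qed
  then show ?thesis by simp
qed

section \<open>Coordinates of multilinear maps\<close>

lemma bounded_linear_axis: "bounded_linear (axis i :: 'a::euclidean_space \<Rightarrow> 'a^'n::finite)"
proof (rule bounded_linear_intro[where K=1])
  fix x y :: 'a and r :: real
  show "axis i (x + y) = (axis i x + axis i y :: 'a^'n)" by (simp add: axis_def vec_eq_iff)
  show "axis i (r *\<^sub>R x) = (r *\<^sub>R axis i x :: 'a^'n)" by (simp add: axis_def vec_eq_iff)
  show "norm (axis i x :: 'a^'n) \<le> norm x * 1" by (simp add: norm_eq_sqrt_inner inner_axis_axis)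
qed

lemma has_vector_derivative_vec_lambda:
  fixes f :: "real \<Rightarrow> 'n::finite \<Rightarrow> 'a::euclidean_space"
  assumes "\<And>i. ((\<lambda>s. f s i) has_vector_derivative f' i) F"
  shows "((\<lambda>s. \<chi> i. f s i) has_vector_derivative (\<chi> i. f' i)) F"
proof -
  have "(\<chi> i. w i) = (\<Sum>i\<in>UNIV. axis i (w i) :: 'a^'n)" for w
    by (simp add: vec_eq_iff sum_component axis_def)
  then show ?thesis
    by (simp only:) (intro has_vector_derivative_sum bounded_linear.has_vector_derivative[OF bounded_linear_axis] assms)
qed

text \<open>Bilinear and trilinear maps on \<open>real^'n\<close> are identified with their coefficient arrays, so that
  linear ODEs for them can be treated in a Euclidean space.\<close>

definition coords2 :: "'n::finite brkt \<Rightarrow> real^'n^'n^'n" where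
  "coords2 f = (\<chi> i j. f (axis i 1) (axis j 1))"

definition of_coords2 :: "real^'n^'n^'n \<Rightarrow> 'n::finite brkt" where
  "of_coords2 v X Y = (\<Sum>i\<in>UNIV. \<Sum>j\<in>UNIV. (X$i * Y$j) *\<^sub>R (v$i$j))"

lemma of_coords2_coords2: "bilinear f \<Longrightarrow> of_coords2 (coords2 f) = f"
  by (simp add: fun_eq_iff of_coords2_def coords2_def bilinear_axis_expansion[symmetric])

lemma bilinear_of_coords2: "bilinear (of_coords2 v)"
  unfolding bilinear_def of_coords2_def
  by (auto intro!: linearI simp: sum.distrib scaleR_sum_right algebra_simps scaleR_add_left)

lemma of_coords2_add: "of_coords2 (v + w) = (\<lambda>X Y. of_coords2 v X Y + of_coords2 w X Y)"
  by (simp add: fun_eq_iff of_coords2_def sum.distrib scaleR_add_right)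

lemma of_coords2_scale: "of_coords2 (c *\<^sub>R v) = (\<lambda>X Y. c *\<^sub>R of_coords2 v X Y)"
  by (simp add: fun_eq_iff of_coords2_def scaleR_sum_right mult_ac)

lemma coords2_eq_0:
  assumes "coords2 f = 0" "bilinear f"
  shows "f X Y = 0"
proof -
  have "f X Y = of_coords2 (coords2 f) X Y" by (simp add: of_coords2_coords2[OF assms(2)])
  then show ?thesis by (simp add: assms(1) of_coords2_def)
qed

lemma has_vector_derivative_coords2:
  "(\<And>X Y. ((\<lambda>s. f s X Y) has_vector_derivative f' X Y) F) \<Longrightarrow>
    ((\<lambda>s. coords2 (f s)) has_vector_derivative coords2 f') F"
  unfolding coords2_def by (intro has_vector_derivative_vec_lambda)

lemma tendsto_coords2:
  "(\<And>X Y. ((\<lambda>s. f s X Y) \<longlongrightarrow> f0 X Y) F) \<Longrightarrow> ((\<lambda>s. coords2 (f s)) \<longlongrightarrow> coords2 f0) F"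
  unfolding coords2_def by (intro tendsto_vec_lambda)

lemma linear_coords2_comp:
  assumes "\<And>v w. G (v + w) = (\<lambda>X Y. G v X Y + G w X Y)" "\<And>c v. G (c *\<^sub>R v) = (\<lambda>X Y. c *\<^sub>R G v X Y)"
  shows "linear (\<lambda>v. coords2 (G v))"
  by (rule linearI) (simp_all add: coords2_def vec_eq_iff assms)

definition trilinear :: "(real^'n::finite \<Rightarrow> real^'n \<Rightarrow> real^'n \<Rightarrow> real^'n) \<Rightarrow> bool" where
  "trilinear f \<longleftrightarrow> (\<forall>Z. bilinear (\<lambda>X Y. f X Y Z)) \<and> (\<forall>X Y. linear (f X Y))"

definition coords3 :: "(real^'n::finite \<Rightarrow> real^'n \<Rightarrow> real^'n \<Rightarrow> real^'n) \<Rightarrow> real^'n^'n^'n^'n" where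
  "coords3 f = (\<chi> i j k. f (axis i 1) (axis j 1) (axis k 1))"

definition of_coords3 :: "real^'n^'n^'n^'n \<Rightarrow> real^'n::finite \<Rightarrow> real^'n \<Rightarrow> real^'n \<Rightarrow> real^'n" where
  "of_coords3 v X Y Z = (\<Sum>i\<in>UNIV. \<Sum>j\<in>UNIV. \<Sum>k\<in>UNIV. (X$i * Y$j * Z$k) *\<^sub>R (v$i$j$k))"

lemma trilinear_axis_expansion:
  assumes "trilinear f"
  shows "f X Y Z = (\<Sum>i\<in>UNIV. \<Sum>j\<in>UNIV. \<Sum>k\<in>UNIV. (X$i * Y$j * Z$k) *\<^sub>R f (axis i 1) (axis j 1) (axis k 1))"
proof -
  have b: "bilinear (\<lambda>X Y. f X Y Z)" for Z using assms by (simp add: trilinear_def)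
  have l: "linear (f X Y)" for X Y using assms by (simp add: trilinear_def)
  have "f X Y Z = (\<Sum>i\<in>UNIV. \<Sum>j\<in>UNIV. (X$i * Y$j) *\<^sub>R f (axis i 1) (axis j 1) Z)"
    using bilinear_axis_expansion[OF b] by blast
  also have "\<dots> = (\<Sum>i\<in>UNIV. \<Sum>j\<in>UNIV. (X$i * Y$j) *\<^sub>R (\<Sum>k\<in>UNIV. Z$k *\<^sub>R f (axis i 1) (axis j 1) (axis k 1)))"
    by (intro sum.cong refl arg_cong[where f="\<lambda>v. _ *\<^sub>R v"] linear_axis_expansion[OF l])
  also have "\<dots> = (\<Sum>i\<in>UNIV. \<Sum>j\<in>UNIV. \<Sum>k\<in>UNIV. (X$i * Y$j * Z$k) *\<^sub>R f (axis i 1) (axis j 1) (axis k 1))"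
    by (simp add: scaleR_sum_right mult.assoc)
  finally show ?thesis .
qed

lemma of_coords3_coords3: "trilinear f \<Longrightarrow> of_coords3 (coords3 f) = f"
  by (simp add: fun_eq_iff of_coords3_def coords3_def trilinear_axis_expansion[symmetric])

lemma of_coords3_add: "of_coords3 (v + w) = (\<lambda>X Y Z. of_coords3 v X Y Z + of_coords3 w X Y Z)"
  by (simp add: fun_eq_iff of_coords3_def sum.distrib scaleR_add_right)

lemma of_coords3_scale: "of_coords3 (c *\<^sub>R v) = (\<lambda>X Y Z. c *\<^sub>R of_coords3 v X Y Z)"
  by (simp add: fun_eq_iff of_coords3_def scaleR_sum_right mult_ac)

lemma coords3_eq_0:
  assumes "coords3 f = 0" "trilinear f"
  shows "f X Y Z = 0"
proof -
  have "f X Y Z = of_coords3 (coords3 f) X Y Z" by (simp add: of_coords3_coords3[OF assms(2)])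
  then show ?thesis by (simp add: assms(1) of_coords3_def)
qed

lemma has_vector_derivative_coords3:
  "(\<And>X Y Z. ((\<lambda>s. f s X Y Z) has_vector_derivative f' X Y Z) F) \<Longrightarrow>
    ((\<lambda>s. coords3 (f s)) has_vector_derivative coords3 f') F"
  unfolding coords3_def by (intro has_vector_derivative_vec_lambda)

lemma tendsto_coords3:
  "(\<And>X Y Z. ((\<lambda>s. f s X Y Z) \<longlongrightarrow> f0 X Y Z) F) \<Longrightarrow> ((\<lambda>s. coords3 (f s)) \<longlongrightarrow> coords3 f0) F"
  unfolding coords3_def by (intro tendsto_vec_lambda)

lemma linear_coords3_comp:
  assumes "\<And>v w. G (v + w) = (\<lambda>X Y Z. G v X Y Z + G w X Y Z)"
    "\<And>c v. G (c *\<^sub>R v) = (\<lambda>X Y Z. c *\<^sub>R G v X Y Z)"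
  shows "linear (\<lambda>v. coords3 (G v))"
  by (rule linearI) (simp_all add: coords3_def vec_eq_iff assms)

definition jacobiator :: "'n::finite brkt \<Rightarrow> real^'n \<Rightarrow> real^'n \<Rightarrow> real^'n \<Rightarrow> real^'n" where
  "jacobiator mu X Y Z = mu X (mu Y Z) + mu Y (mu Z X) + mu Z (mu X Y)"

lemma trilinear_jacobiator:
  assumes mu: "bilinear mu"
  shows "trilinear (jacobiator mu)"
  unfolding trilinear_def bilinear_def jacobiator_def
  by (intro allI conjI linearI) (simp_all add: bilinear_ladd[OF mu] bilinear_radd[OF mu]
      bilinear_lmul[OF mu] bilinear_rmul[OF mu] algebra_simps)

section \<open>The bracket flow\<close>

locale bracket_flow =
  fixes J :: "real^'n::finite \<Rightarrow> real^'n" and om :: "real^'n \<Rightarrow> real^'n \<Rightarrow> real"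
    and br :: "'n brkt" and S :: "real set" and mu :: "real \<Rightarrow> 'n brkt"
  assumes halfline: "S = {0..} \<or> S = {..0}"
    and herm: "hermitian_lie_algebra br J om"
    and mu_0: "mu 0 = br"
    and bilinear_mu: "\<And>t. t \<in> S \<Longrightarrow> bilinear (mu t)"
    and has_vector_derivative_mu: "\<And>t X Y. t \<in> S \<Longrightarrow>
      ((\<lambda>s. mu s X Y) has_vector_derivative delta (mu t) (chern_ricci_op (mu t) J om) X Y) (at t within S)"
begin

abbreviation P :: "real \<Rightarrow> real^'n \<Rightarrow> real^'n" where
  "P t \<equiv> chern_ricci_op (mu t) J om"

sublocale complex_structure J
  using herm by (simp add: hermitian_lie_algebra_iff)

lemma hermitian_form_om: "hermitian_form om J"
  using herm by (simp add: hermitian_lie_algebra_iff)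

lemma nondegenerate_om: "nondegenerate om"
  by (rule hermitian_form_nondegenerate[OF hermitian_form_om])

lemma linear_P: "t \<in> S \<Longrightarrow> linear (P t)"
  by (rule linear_chern_ricci_op[OF nondegenerate_om bilinear_mu linear_J])

lemma eventually_bilinear_mu: "eventually (\<lambda>s. bilinear (mu s)) (at t within S)"
  using bilinear_mu by (auto simp: eventually_at_filter)

lemma tendsto_mu: "t \<in> S \<Longrightarrow> ((\<lambda>s. mu s X Y) \<longlongrightarrow> mu t X Y) (at t within S)"
  using has_vector_derivative_continuous[OF has_vector_derivative_mu] by (simp add: continuous_within)

lemma tendsto_mu_args:
  "t \<in> S \<Longrightarrow> (a \<longlongrightarrow> a0) (at t within S) \<Longrightarrow> (b \<longlongrightarrow> b0) (at t within S) \<Longrightarrow>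
    ((\<lambda>s. mu s (a s) (b s)) \<longlongrightarrow> mu t a0 b0) (at t within S)"
  by (rule tendsto_bracket[OF eventually_bilinear_mu tendsto_mu bilinear_mu])

lemma tendsto_P:
  "t \<in> S \<Longrightarrow> (z \<longlongrightarrow> z0) (at t within S) \<Longrightarrow> ((\<lambda>s. P s (z s)) \<longlongrightarrow> P t z0) (at t within S)"
  by (rule tendsto_chern_ricci_op[OF eventually_bilinear_mu tendsto_mu bilinear_mu linear_J nondegenerate_om])

lemma has_vector_derivative_mu_right:
  assumes t: "t \<in> S" and b: "(b has_vector_derivative b') (at t within S)"
  shows "((\<lambda>s. mu s X (b s)) has_vector_derivative (mu t X b' + delta (mu t) (P t) X (b t))) (at t within S)"
proof -
  note expansion = linear_axis_expansion[OF bilinear_linear_right]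
  have "((\<lambda>s. \<Sum>k\<in>UNIV. b s $ k *\<^sub>R mu s X (axis k 1)) has_vector_derivative
      (\<Sum>k\<in>UNIV. b t $ k *\<^sub>R delta (mu t) (P t) X (axis k 1) + b' $ k *\<^sub>R mu t X (axis k 1))) (at t within S)"
    by (intro has_vector_derivative_sum has_vector_derivative_scaleR has_vector_derivative_mu t
        has_real_derivative_iff_has_vector_derivative[THEN iffD2]
        bounded_linear.has_vector_derivative[OF bounded_linear_vec_nth b])
  moreover have "(\<Sum>k\<in>UNIV. b t $ k *\<^sub>R delta (mu t) (P t) X (axis k 1) + b' $ k *\<^sub>R mu t X (axis k 1))
      = mu t X b' + delta (mu t) (P t) X (b t)"
    by (simp add: sum.distrib expansion[OF bilinear_delta[OF bilinear_mu[OF t] linear_P[OF t]], symmetric]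
        expansion[OF bilinear_mu[OF t], symmetric])
  moreover have "mu s X (b s) = (\<Sum>k\<in>UNIV. b s $ k *\<^sub>R mu s X (axis k 1))" if "s \<in> S" for s
    by (rule expansion[OF bilinear_mu[OF that]])
  ultimately show ?thesis
    by (metis (no_types, lifting) has_vector_derivative_transform t)
qed

lemma linear_ode_zero:
  fixes x :: "real \<Rightarrow> 'v::euclidean_space"
  assumes x0: "x 0 = 0" and der: "\<And>t. t \<in> S \<Longrightarrow> (x has_vector_derivative L t (x t)) (at t within S)"
    and lin: "\<And>t. t \<in> S \<Longrightarrow> linear (L t)"
    and cont: "\<And>t v. t \<in> S \<Longrightarrow> ((\<lambda>s. L s v) \<longlongrightarrow> L t v) (at t within S)"
    and t: "t \<in> S"
  shows "x t = 0"
proof -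
  have cont': "continuous_on S (\<lambda>t. L t v)" for v using cont by (simp add: continuous_on_def)
  from halfline show ?thesis
  proof
    assume S: "S = {0..}"
    show ?thesis by (rule linear_ode_zero_on_nonneg[of x L]) (use x0 der lin cont' t S in auto)
  next
    assume S: "S = {..0}"
    show ?thesis by (rule linear_ode_zero_on_nonpos[of x L]) (use x0 der lin cont' t S in auto)
  qed
qed

lemma lie_bracket_br: "lie_bracket br"
  using herm by (simp add: hermitian_lie_algebra_iff)

lemma flow_antisym:
  assumes t: "t \<in> S"
  shows "mu t X Y = - mu t Y X"
proof -
  define sym where "sym s X Y = mu s X Y + mu s Y X" for s X Y
  have bilinear_sym: "bilinear (sym s)" if "s \<in> S" for s
  proof -
    note mu = bilinear_mu[OF that]
    show ?thesis unfolding sym_def bilinear_def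
      by (intro allI conjI linearI) (simp_all add: bilinear_ladd[OF mu] bilinear_radd[OF mu]
          bilinear_lmul[OF mu] bilinear_rmul[OF mu] scaleR_add_right)
  qed
  have "coords2 (sym t) = 0"
  proof (rule linear_ode_zero[where L = "\<lambda>t v. coords2 (delta (of_coords2 v) (P t))"])
    have "br X Y + br Y X = 0" for X Y
      using lie_bracket_antisym[OF lie_bracket_br, of X Y] by simp
    then have "sym 0 = (\<lambda>_ _. 0)"
      by (simp add: fun_eq_iff sym_def mu_0)
    then show "coords2 (sym 0) = 0" by (simp add: coords2_def vec_eq_iff)
  next
    fix t assume t: "t \<in> S"
    have "delta (sym t) (P t) = (\<lambda>X Y. delta (mu t) (P t) X Y + delta (mu t) (P t) Y X)"
      by (simp add: fun_eq_iff sym_def delta_def linear_add[OF linear_P[OF t]] algebra_simps)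
    moreover have "((\<lambda>s. coords2 (sym s)) has_vector_derivative
        coords2 (\<lambda>X Y. delta (mu t) (P t) X Y + delta (mu t) (P t) Y X)) (at t within S)"
      unfolding sym_def
      by (intro has_vector_derivative_coords2 has_vector_derivative_add has_vector_derivative_mu t)
    ultimately show "((\<lambda>s. coords2 (sym s)) has_vector_derivative
        coords2 (delta (of_coords2 (coords2 (sym t))) (P t))) (at t within S)"
      by (simp add: of_coords2_coords2[OF bilinear_sym[OF t]])
    show "linear (\<lambda>v. coords2 (delta (of_coords2 v) (P t)))"
      by (rule linear_coords2_comp) (simp_all add: of_coords2_add of_coords2_scale delta_add delta_scale linear_P t)
    show "((\<lambda>s. coords2 (delta (of_coords2 v) (P s))) \<longlongrightarrow> coords2 (delta (of_coords2 v) (P t))) (at t within S)" for v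
      unfolding delta_def
      by (intro tendsto_coords2 tendsto_intros tendsto_bilinear[OF bilinear_of_coords2] tendsto_P t tendsto_const)
  qed (rule t)
  then have "sym t X Y = 0" by (rule coords2_eq_0[OF _ bilinear_sym[OF t]])
  then show ?thesis by (simp add: sym_def eq_neg_iff_add_eq_0)
qed

lemma flow_jacobi:
  assumes t: "t \<in> S"
  shows "mu t X (mu t Y Z) + mu t Y (mu t Z X) + mu t Z (mu t X Y) = 0"
proof -
  define delta3 where "delta3 j A X Y Z = j (A X) Y Z + j X (A Y) Z + j X Y (A Z) - A (j X Y Z)"
    for j :: "real^'n \<Rightarrow> real^'n \<Rightarrow> real^'n \<Rightarrow> real^'n" and A :: "real^'n \<Rightarrow> real^'n" and X Y Z
  have "coords3 (jacobiator (mu t)) = 0"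
  proof (rule linear_ode_zero[where L = "\<lambda>t v. coords3 (delta3 (of_coords3 v) (P t))"])
    have "jacobiator (mu 0) = (\<lambda>_ _ _. 0)"
      by (simp add: fun_eq_iff jacobiator_def mu_0 lie_bracket_jacobi[OF lie_bracket_br])
    then show "coords3 (jacobiator (mu 0)) = 0" by (simp add: coords3_def vec_eq_iff)
  next
    fix t assume t: "t \<in> S"
    let ?D = "delta (mu t) (P t)"
    have "((\<lambda>s. coords3 (jacobiator (mu s))) has_vector_derivative coords3 (\<lambda>X Y Z. (mu t X (?D Y Z) + ?D X (mu t Y Z))
        + (mu t Y (?D Z X) + ?D Y (mu t Z X)) + (mu t Z (?D X Y) + ?D Z (mu t X Y)))) (at t within S)"
      unfolding jacobiator_def
      by (intro has_vector_derivative_coords3 has_vector_derivative_add has_vector_derivative_mu_right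
          has_vector_derivative_mu t)
    moreover have "(\<lambda>X Y Z. (mu t X (?D Y Z) + ?D X (mu t Y Z)) + (mu t Y (?D Z X) + ?D Y (mu t Z X))
        + (mu t Z (?D X Y) + ?D Z (mu t X Y))) = delta3 (of_coords3 (coords3 (jacobiator (mu t)))) (P t)"
    proof -
      note mu = bilinear_mu[OF t] and P = linear_P[OF t]
      show ?thesis
        unfolding of_coords3_coords3[OF trilinear_jacobiator[OF bilinear_mu[OF t]]]
        by (simp add: fun_eq_iff delta3_def delta_def jacobiator_def bilinear_ladd[OF mu] bilinear_radd[OF mu]
            bilinear_lsub[OF mu] bilinear_rsub[OF mu] linear_add[OF P] linear_diff[OF P] algebra_simps)
    qed
    ultimately show "((\<lambda>s. coords3 (jacobiator (mu s))) has_vector_derivative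
        coords3 (delta3 (of_coords3 (coords3 (jacobiator (mu t)))) (P t))) (at t within S)"
      by simp
    show "linear (\<lambda>v. coords3 (delta3 (of_coords3 v) (P t)))"
      by (rule linear_coords3_comp) (simp_all add: fun_eq_iff delta3_def of_coords3_add of_coords3_scale
          linear_add[OF linear_P[OF t]] linear_scale[OF linear_P[OF t]] algebra_simps)
    show "((\<lambda>s. coords3 (delta3 (of_coords3 v) (P s))) \<longlongrightarrow> coords3 (delta3 (of_coords3 v) (P t)))
        (at t within S)" for v
      unfolding delta3_def of_coords3_def
      by (intro tendsto_coords3 tendsto_intros tendsto_P t tendsto_const)
  qed (rule t)
  then show ?thesis
    using coords3_eq_0[OF _ trilinear_jacobiator[OF bilinear_mu[OF t]]] by (simp add: jacobiator_def)
qed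

lemma flow_lie_bracket: "t \<in> S \<Longrightarrow> lie_bracket (mu t)"
  unfolding lie_bracket_def by (intro conjI allI bilinear_mu flow_antisym flow_jacobi)

lemma flow_nijenhuis:
  assumes t: "t \<in> S"
  shows "nijenhuis (mu t) J X Y = 0"
proof -
  have "coords2 (nijenhuis (mu t) J) = 0"
  proof (rule linear_ode_zero[where L = "\<lambda>t v. coords2 (nijenhuis_evolution (mu t) J om (of_coords2 v))"])
    have "nijenhuis br J = (\<lambda>_ _. 0)"
      using herm by (simp add: fun_eq_iff hermitian_lie_algebra_iff)
    then show "coords2 (nijenhuis (mu 0) J) = 0" by (simp add: coords2_def vec_eq_iff mu_0)
  next
    fix t assume t: "t \<in> S"
    have "((\<lambda>s. coords2 (nijenhuis (mu s) J)) has_vector_derivative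
        coords2 (nijenhuis (delta (mu t) (P t)) J)) (at t within S)"
      unfolding nijenhuis_def
      by (intro has_vector_derivative_coords2 has_vector_derivative_diff has_vector_derivative_mu t
          bounded_linear.has_vector_derivative[OF linear_J[unfolded linear_conv_bounded_linear]])
    then show "((\<lambda>s. coords2 (nijenhuis (mu s) J)) has_vector_derivative
        coords2 (nijenhuis_evolution (mu t) J om (of_coords2 (coords2 (nijenhuis (mu t) J))))) (at t within S)"
      by (simp add: of_coords2_coords2[OF bilinear_nijenhuis[OF bilinear_mu[OF t]]]
          nijenhuis_delta_chern_ricci_op[OF hermitian_form_om flow_lie_bracket[OF t]])
    show "linear (\<lambda>v. coords2 (nijenhuis_evolution (mu t) J om (of_coords2 v)))"
      by (rule linear_coords2_comp) (simp_all add: of_coords2_add of_coords2_scale bilinear_of_coords2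
          nijenhuis_evolution_add[OF bilinear_mu[OF t] linear_P[OF t]]
          nijenhuis_evolution_scale[OF bilinear_mu[OF t] linear_P[OF t]])
    show "((\<lambda>s. coords2 (nijenhuis_evolution (mu s) J om (of_coords2 v))) \<longlongrightarrow>
        coords2 (nijenhuis_evolution (mu t) J om (of_coords2 v))) (at t within S)" for v
      unfolding nijenhuis_evolution_def delta_def nijenhuis_commutator_term_def
      by (intro tendsto_coords2 tendsto_intros tendsto_ricci_J_commutator[OF eventually_bilinear_mu
          tendsto_mu bilinear_mu[OF t] linear_J bilinear_of_coords2] tendsto_P tendsto_linear[OF linear_J]
          tendsto_mu_args tendsto_bilinear[OF bilinear_of_coords2] tendsto_const t)
  qed (rule t)
  then show ?thesis
    by (rule coords2_eq_0[OF _ bilinear_nijenhuis[OF bilinear_mu[OF t]]])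
qed

lemma flow_hermitian: "t \<in> S \<Longrightarrow> hermitian_lie_algebra (mu t) J om"
  by (simp add: hermitian_lie_algebra_iff flow_lie_bracket flow_nijenhuis hermitian_form_om
      complex_structure_axioms)

end

section \<open>Limits of the flow\<close>

lemma hermitian_lie_algebra_limit:
  fixes mu :: "'a \<Rightarrow> 'n::finite brkt"
  assumes F: "F \<noteq> bot" and herm: "eventually (\<lambda>t. hermitian_lie_algebra (mu t) J om) F"
    and conv: "\<And>X Y. ((\<lambda>t. mu t X Y) \<longlongrightarrow> lam X Y) F"
  shows "hermitian_lie_algebra lam J om"
proof -
  obtain t where "hermitian_lie_algebra (mu t) J om" using eventually_happens'[OF F herm] by blast
  then have J: "complex_structure J" and om: "hermitian_form om J"
    by (simp_all add: hermitian_lie_algebra_iff)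
  interpret complex_structure J by (rule J)
  have lie: "eventually (\<lambda>t. lie_bracket (mu t)) F"
    and nij: "eventually (\<lambda>t. \<forall>X Y. nijenhuis (mu t) J X Y = 0) F"
    using herm by (auto elim!: eventually_mono simp: hermitian_lie_algebra_iff)
  have bil: "eventually (\<lambda>t. bilinear (mu t)) F"
    using lie by (auto elim!: eventually_mono intro: lie_bracket_bilinear)
  have lam: "bilinear lam" by (rule bilinear_limit[OF F bil conv])
  have limit_0: "f0 = 0" if "(f \<longlongrightarrow> f0) F" "eventually (\<lambda>t. f t = 0) F" for f :: "'a \<Rightarrow> real^'n" and f0
    using tendsto_unique[OF F that(1) tendsto_eventually[OF that(2)]] .
  note tendsto_mu = tendsto_bracket[OF bil conv lam]
  have "lam X Y + lam Y X = 0" for X Y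
    by (rule limit_0[OF tendsto_add[OF conv conv]])
      (use lie in \<open>auto elim!: eventually_mono simp: lie_bracket_antisym[where X = X and Y = Y]\<close>)
  moreover have "lam X (lam Y Z) + lam Y (lam Z X) + lam Z (lam X Y) = 0" for X Y Z
  proof (rule limit_0)
    show "((\<lambda>t. mu t X (mu t Y Z) + mu t Y (mu t Z X) + mu t Z (mu t X Y)) \<longlongrightarrow>
        lam X (lam Y Z) + lam Y (lam Z X) + lam Z (lam X Y)) F"
      by (intro tendsto_intros tendsto_mu conv tendsto_const)
  qed (use lie in \<open>auto elim!: eventually_mono simp: lie_bracket_jacobi\<close>)
  moreover have "nijenhuis lam J X Y = 0" for X Y
  proof (rule limit_0)
    show "((\<lambda>t. nijenhuis (mu t) J X Y) \<longlongrightarrow> nijenhuis lam J X Y) F"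
      unfolding nijenhuis_def by (intro tendsto_intros tendsto_linear[OF linear_J] conv)
  qed (use nij in \<open>auto elim!: eventually_mono\<close>)
  ultimately show ?thesis
    unfolding hermitian_lie_algebra_iff lie_bracket_def
    by (intro conjI allI lam J om) (simp_all add: eq_neg_iff_add_eq_0)
qed

lemma (in bracket_flow) chern_ricci_flat_limit:
  assumes F: "F \<noteq> bot" and S: "eventually (\<lambda>t. t \<in> S) F"
    and conv: "\<And>X Y. ((\<lambda>t. mu t X Y) \<longlongrightarrow> lam X Y) F"
    and stationary: "\<And>X Y c. ((\<lambda>t. delta (mu t) (P t) X Y) \<longlongrightarrow> c) F \<Longrightarrow> c = 0"
  shows "chern_ricci_op lam J om X = 0"
proof (rule chern_ricci_op_eq_0_if_derivation)
  show herm: "hermitian_lie_algebra lam J om"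
    by (rule hermitian_lie_algebra_limit[OF F _ conv]) (use S in \<open>auto elim!: eventually_mono intro: flow_hermitian\<close>)
  have "eventually (\<lambda>t. bilinear (mu t)) F"
    using S by (auto elim!: eventually_mono intro: bilinear_mu)
  from tendsto_delta_chern_ricci_op[OF this conv _ linear_J nondegenerate_om]
  show "delta lam (chern_ricci_op lam J om) X Y = 0" for X Y
    using herm by (intro stationary) (simp add: hermitian_lie_algebra_iff lie_bracket_bilinear)
qed

lemma (in bracket_flow) chern_ricci_flat_limit_at_top:
  assumes S: "S = {0..}" and conv: "\<And>X Y. ((\<lambda>t. mu t X Y) \<longlongrightarrow> lam X Y) at_top"
  shows "chern_ricci_op lam J om X = 0"
proof (rule chern_ricci_flat_limit[OF _ _ conv])
  show "eventually (\<lambda>t. t \<in> S) at_top" using S by (simp add: eventually_ge_at_top)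
  show "c = 0" if "((\<lambda>t. delta (mu t) (P t) X Y) \<longlongrightarrow> c) at_top" for X Y c
    by (rule vector_deriv_tendsto_at_top_eq_0[OF _ that conv]) (use has_vector_derivative_mu S in auto)
qed simp

lemma (in bracket_flow) chern_ricci_flat_limit_at_bot:
  assumes S: "S = {..0}" and conv: "\<And>X Y. ((\<lambda>t. mu t X Y) \<longlongrightarrow> lam X Y) at_bot"
  shows "chern_ricci_op lam J om X = 0"
proof (rule chern_ricci_flat_limit[OF _ _ conv])
  show "eventually (\<lambda>t. t \<in> S) at_bot" using S by (simp add: eventually_le_at_bot)
  show "c = 0" if "((\<lambda>t. delta (mu t) (P t) X Y) \<longlongrightarrow> c) at_bot" for X Y c
    by (rule vector_deriv_tendsto_at_bot_eq_0[OF _ that conv]) (use has_vector_derivative_mu S in auto)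
qed simp

theorem lemma5p2:
  fixes br lam :: "'n::finite brkt"
    and J :: "real^'n \<Rightarrow> real^'n"
    and om :: "real^'n \<Rightarrow> real^'n \<Rightarrow> real"
    and mu :: "real \<Rightarrow> 'n brkt"
  assumes herm: "hermitian_lie_algebra br J om"
  shows
   "((mu 0 = br \<and> (\<forall>t\<ge>0. bilinear (mu t)) \<and>
      (\<forall>t\<ge>0. \<forall>X Y. ((\<lambda>s. mu s X Y) has_vector_derivative
                   delta (mu t) (chern_ricci_op (mu t) J om) X Y) (at t within {0..})) \<and>
      (\<forall>X Y. ((\<lambda>t. mu t X Y) \<longlongrightarrow> lam X Y) at_top))
     \<longrightarrow> (\<forall>X. chern_ricci_op lam J om X = 0))
  \<and> ((mu 0 = br \<and> (\<forall>t\<le>0. bilinear (mu t)) \<and>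
      (\<forall>t\<le>0. \<forall>X Y. ((\<lambda>s. mu s X Y) has_vector_derivative
                   delta (mu t) (chern_ricci_op (mu t) J om) X Y) (at t within {..0})) \<and>
      (\<forall>X Y. ((\<lambda>t. mu t X Y) \<longlongrightarrow> lam X Y) at_bot))
     \<longrightarrow> (\<forall>X. chern_ricci_op lam J om X = 0))"
  using herm
  by (intro conjI impI allI; elim conjE)
    (auto simp: bracket_flow_def intro: bracket_flow.chern_ricci_flat_limit_at_top[where S = "{0..}"]
      bracket_flow.chern_ricci_flat_limit_at_bot[where S = "{..0}"])

end
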